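(* Let $D>1$ be fixed, $0<\lambda<\lambda_D$, and let $\Gamma$ be a complete $D$-ary tree of depth $h$ with \[ h\le \underline h-\frac{\ln(\underline h)}{\ln(D)}+\frac{\ln(1-\frac1D)}{\ln(D)}. \] Then $\mathbb{E}_0(L^2)\to1$ as $n\to\infty$, where $L=\mathbb{P}_1(G)/\mathbb{P}_0(G)$.
   Context: Model: $\mathbb{P}_0$: $G\sim\mathcal G(n,\lambda/n)$; $\mathbb{P}_1$: $G=G_0\cup G'$ with $G_0\sim\mathcal G(n,\lambda/n)$ and $G'$ the image of $\Gamma$ under a uniformly random injection of its vertex set into $[n]$, independent of $G_0$; $\mathbb{E}_0$ is expectation under $\mathbb{P}_0$. A complete $D$-ary tree of depth $h$ has root at depth $0$, each vertex at depth $<h$ has $D$ children, and $K=(D^{h+1}-1)/(D-1)$ vertices. $\psi_D(\mu)=\mathbb{P}(\mathrm{Poi}(\mu)\ge D)$; $p_*(D,\lambda)$ is the largest nonnegative root of $p=\psi_D(\lambda p)$; $\lambda_D=\sup\{\lambda>0:p_*(D,\lambda)=0\}$. $p_h$ is the probability that a Galton–Watson tree with offspring $\mathrm{Poi}(\lambda)$ contains a complete $D$-ary tree of depth $h$ rooted at its root; $\underline h=\sup\{h>0:p_h>\ln(n)/n\}$. *)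

theory Defs
  imports "HOL-Probability.Probability" "HOL-Library.FuncSet"
begin

text \<open>psi_D(mu) = P(Poi(mu) >= D) = 1 - sum_{k<D} e^{-mu} mu^k / k!\<close>
definition psiD :: "nat \<Rightarrow> real \<Rightarrow> real" where
  "psiD D \<mu> = 1 - (\<Sum>k<D. exp (-\<mu>) * \<mu> ^ k / fact k)"

definition pstar :: "nat \<Rightarrow> real \<Rightarrow> real" where
  "pstar D lam = Sup {p. 0 \<le> p \<and> p = psiD D (lam * p)}"

definition lambdaD :: "nat \<Rightarrow> real" where
  "lambdaD D = Sup {lam. 0 < lam \<and> pstar D lam = 0}"

text \<open>p_h: probability that a Poisson(lambda) Galton-Watson tree contains a complete
  D-ary tree of depth h rooted at its root (recursive characterisation
  p_0 = 1, p_{h+1} = psi_D(lambda p_h)).\<close>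
fun ph :: "nat \<Rightarrow> real \<Rightarrow> nat \<Rightarrow> real" where
  "ph D lam 0 = 1"
| "ph D lam (Suc h) = psiD D (lam * ph D lam h)"

definition hbar :: "nat \<Rightarrow> real \<Rightarrow> nat \<Rightarrow> nat" where
  "hbar D lam n = Sup {h. 0 < h \<and> ph D lam h > ln (real n) / real n}"

text \<open>Graphs on vertex set [n] = {0..<n}: sets of edges, edges being 2-element sets.\<close>
definition pairs :: "nat \<Rightarrow> nat set set" where
  "pairs n = {e. \<exists>i j. i < n \<and> j < n \<and> i \<noteq> j \<and> e = {i, j}}"

definition treesize :: "nat \<Rightarrow> nat \<Rightarrow> nat" where
  "treesize D h = (D ^ (h + 1) - 1) div (D - 1)"

text \<open>Complete D-ary tree of depth h on vertices {0..<K} (heap labelling: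
  the parent of vertex j >= 1 is (j - 1) div D).\<close>
definition tree_edges :: "nat \<Rightarrow> nat \<Rightarrow> nat set set" where
  "tree_edges D h = {{(j - 1) div D, j} | j. 1 \<le> j \<and> j < treesize D h}"

definition P0 :: "real \<Rightarrow> nat \<Rightarrow> nat set set pmf" where
  "P0 lam n = map_pmf (\<lambda>f. {e \<in> pairs n. f e})
      (Pi_pmf (pairs n) False (\<lambda>_. bernoulli_pmf (lam / real n)))"

definition injections :: "nat \<Rightarrow> nat \<Rightarrow> (nat \<Rightarrow> nat) set" where
  "injections K n = {\<sigma>. \<sigma> \<in> {0..<K} \<rightarrow>\<^sub>E {0..<n} \<and> inj_on \<sigma> {0..<K}}"

definition P1 :: "nat \<Rightarrow> nat \<Rightarrow> real \<Rightarrow> nat \<Rightarrow> nat set set pmf" where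
  "P1 D h lam n =
     bind_pmf (P0 lam n) (\<lambda>G0.
       map_pmf (\<lambda>\<sigma>. G0 \<union> (\<lambda>e. \<sigma> ` e) ` tree_edges D h)
         (pmf_of_set (injections (treesize D h) n)))"

definition LR :: "nat \<Rightarrow> nat \<Rightarrow> real \<Rightarrow> nat \<Rightarrow> nat set set \<Rightarrow> real" where
  "LR D h lam n G = pmf (P1 D h lam n) G / pmf (P0 lam n) G"

definition second_moment :: "nat \<Rightarrow> nat \<Rightarrow> real \<Rightarrow> nat \<Rightarrow> real" where
  "second_moment D h lam n = measure_pmf.expectation (P0 lam n) (\<lambda>G. (LR D h lam n G)\<^sup>2)"

end

(*
  Below lambda_D the probabilities p_h tend to 0, and since p_(h+1) <= (lambda p_h)^D / D! they
  then decay doubly exponentially.  As p_hbar > ln n / n, this gives D^hbar = O(ln n), so the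
  hypothesis on h makes the planted tree small: it has K = o(ln n) vertices.

  The likelihood ratio is the average, over placements sigma of Gamma, of the likelihood ratio
  1{sigma(Gamma) <= G} / p^|sigma(Gamma)| of a fixed planting (p = lambda/n); hence
  E_0(L^2) = E (1/p)^|sigma(Gamma) cap tau(Gamma)| for independent uniform placements sigma, tau.
  Expanding (1 + x)^m with x = 1/p - 1 over the subsets B of the common edges, each subforest B
  of Gamma contributes at most x^|B| times the number of embeddings of B into Gamma, divided by
  the number (n)_v of placements of its v vertices.  Peeling off one leaf edge at a time bounds
  this by (2K/n) (2(D+1)/lambda)^|B| for nonempty B, so
  E_0(L^2) <= 1 + (2K/n) (1 + 2(D+1)/lambda)^K = 1 + o(1).
*)
theory Submission
  imports Defs "HOL-Real_Asymp.Real_Asymp"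
begin

section \<open>The functions \<open>\<psi>\<^sub>D\<close> and \<open>p\<^sub>h\<close>\<close>

lemma psiD_Lagrange:
  "\<exists>t. \<bar>t\<bar> \<le> \<bar>\<mu>\<bar> \<and> psiD D \<mu> = exp (t - \<mu>) * \<mu> ^ D / fact D"
proof -
  obtain t where t: "\<bar>t\<bar> \<le> \<bar>\<mu>\<bar>"
    "exp \<mu> = (\<Sum>k<D. \<mu> ^ k / fact k) + exp t / fact D * \<mu> ^ D"
    using Maclaurin_exp_le[of \<mu> D] by blast
  have "psiD D \<mu> = exp (-\<mu>) * (exp \<mu> - (\<Sum>k<D. \<mu> ^ k / fact k))"
    unfolding psiD_def
    by (simp add: sum_distrib_left right_diff_distrib exp_minus_inverse mult.commute)
  also have "\<dots> = exp (-\<mu>) * (exp t / fact D * \<mu> ^ D)"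
    using t(2) by simp
  also have "\<dots> = (exp (-\<mu>) * exp t) * \<mu> ^ D / fact D" by simp
  also have "exp (-\<mu>) * exp t = exp (t - \<mu>)" by (simp add: mult_exp_exp)
  finally show ?thesis using t(1) by blast
qed

lemma psiD_pos: "0 < \<mu> \<Longrightarrow> 0 < psiD D \<mu>"
  using psiD_Lagrange[of \<mu> D] by auto

lemma psiD_nonneg: "0 \<le> \<mu> \<Longrightarrow> 0 \<le> psiD D \<mu>"
  using psiD_Lagrange[of \<mu> D] by auto

lemma psiD_le_power: "0 \<le> \<mu> \<Longrightarrow> psiD D \<mu> \<le> \<mu> ^ D / fact D"
proof -
  assume "0 \<le> \<mu>"
  moreover obtain t where "\<bar>t\<bar> \<le> \<bar>\<mu>\<bar>" "psiD D \<mu> = exp (t - \<mu>) * (\<mu> ^ D / fact D)"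
    using psiD_Lagrange[of \<mu> D] by auto
  ultimately show ?thesis
    using mult_right_mono[of "exp (t - \<mu>)" 1 "\<mu> ^ D / fact D"] by simp
qed

lemma psiD_le_1: "0 \<le> \<mu> \<Longrightarrow> psiD D \<mu> \<le> 1"
  unfolding psiD_def by (simp add: sum_nonneg)

lemma Poisson_cdf_has_real_derivative:
  "((\<lambda>x. \<Sum>k<Suc m. exp (-x) * x ^ k / fact k)
     has_real_derivative - exp (-x) * x ^ m / fact m) (at x)"
proof (induction m)
  case 0
  show ?case by (auto intro!: derivative_eq_intros)
next
  case (Suc m)
  have "((\<lambda>x. exp (-x)) has_real_derivative - exp (-x)) (at x)"
    by (auto intro!: derivative_eq_intros)
  from DERIV_cdivide[OF DERIV_mult[OF this DERIV_pow[of "Suc m"]], of "fact (Suc m)"]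
  have "((\<lambda>x. exp (-x) * x ^ Suc m / fact (Suc m)) has_real_derivative
      exp (-x) * x ^ m / fact m - exp (-x) * x ^ Suc m / fact (Suc m)) (at x)"
    by (simp add: fact_Suc diff_divide_distrib mult.commute)
  from DERIV_add[OF Suc.IH this] show ?case by simp
qed

lemma psiD_mono:
  assumes "0 \<le> a" "a \<le> b" shows "psiD D a \<le> psiD D b"
proof (cases D)
  case (Suc m)
  from assms(2) have "(\<Sum>k<Suc m. exp (-b) * b ^ k / fact k) \<le> (\<Sum>k<Suc m. exp (-a) * a ^ k / fact k)"
  proof (rule DERIV_nonpos_imp_nonincreasing[where f = "\<lambda>x. \<Sum>k<Suc m. exp (-x) * x ^ k / fact k"])
    fix x assume "a \<le> x"
    with assms(1) have "- exp (-x) * x ^ m / fact m \<le> 0" by simp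
    then show "\<exists>y. ((\<lambda>x. \<Sum>k<Suc m. exp (-x) * x ^ k / fact k) has_real_derivative y) (at x) \<and> y \<le> 0"
      using Poisson_cdf_has_real_derivative by blast
  qed
  then show ?thesis unfolding psiD_def Suc by simp
qed (simp add: psiD_def)

lemma isCont_psiD: "isCont (psiD D) x"
  unfolding psiD_def[abs_def] by (intro continuous_intros) simp

lemma psiD_less: "D > 1 \<Longrightarrow> 0 < \<mu> \<Longrightarrow> \<mu> \<le> 1 \<Longrightarrow> psiD D \<mu> < \<mu>"
proof -
  assume D: "D > 1" and \<mu>: "0 < \<mu>" "\<mu> \<le> 1"
  have "psiD D \<mu> \<le> \<mu> ^ D / fact D" using \<mu> by (intro psiD_le_power) auto
  also have "\<dots> \<le> \<mu> ^ 2 / fact 2"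
    using D \<mu> by (intro frac_le power_decreasing fact_mono) auto
  also have "\<dots> < \<mu>" using \<mu> by (simp add: power2_eq_square mult_le_cancel_left1)
  finally show ?thesis .
qed

lemma ph_nonneg: "0 \<le> lam \<Longrightarrow> 0 \<le> ph D lam h"
  by (induction h) (auto intro!: psiD_nonneg)

lemma ph_pos: "0 < lam \<Longrightarrow> 0 < ph D lam h"
  by (induction h) (auto intro!: psiD_pos)

lemma ph_mono: "0 \<le> lam \<Longrightarrow> lam \<le> lam' \<Longrightarrow> ph D lam h \<le> ph D lam' h"
proof (induction h)
  case (Suc h)
  then have "lam * ph D lam h \<le> lam' * ph D lam' h"
    by (intro mult_mono) (auto intro: ph_nonneg order.trans)
  then show ?case using Suc.prems by (auto intro!: psiD_mono mult_nonneg_nonneg ph_nonneg)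
qed simp

lemma ph_Suc_le: "0 \<le> lam \<Longrightarrow> ph D lam (Suc h) \<le> ph D lam h"
proof (induction h)
  case (Suc h)
  then have "lam * ph D lam (Suc h) \<le> lam * ph D lam h"
    by (intro mult_left_mono) auto
  then show ?case using Suc.prems by (auto intro!: psiD_mono psiD_nonneg mult_nonneg_nonneg ph_nonneg)
qed (simp add: psiD_le_1)

lemma ph_Suc_le_power: "0 \<le> lam \<Longrightarrow> ph D lam (Suc h) \<le> (lam * ph D lam h) ^ D / fact D"
  using ph_nonneg[of lam D h] by (auto intro!: psiD_le_power)

lemma pstar_1: "D > 1 \<Longrightarrow> pstar D 1 = 0"
proof -
  assume D: "D > 1"
  have "psiD D 0 = 0"
    using psiD_le_power[of 0 D] psiD_nonneg[of 0 D] D by (simp add: power_0_left)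
  moreover have "p = 0" if "0 \<le> p" "p = psiD D p" for p
    using psiD_less[OF D, of p] psiD_le_1[of p D] that by fastforce
  ultimately have "{p. 0 \<le> p \<and> p = psiD D (1 * p)} = {0}" by auto
  then show ?thesis unfolding pstar_def by simp
qed

lemma lambdaD_witness:
  assumes "D > 1" "lam < lambdaD D"
  obtains l where "lam < l" "0 < l" "pstar D l = 0"
proof -
  let ?S = "{l. 0 < l \<and> pstar D l = 0}"
  have "1 \<in> ?S" using pstar_1[OF assms(1)] by simp
  have "\<exists>l\<in>?S. lam < l"
  proof (cases "bdd_above ?S")
    case True
    then show ?thesis
      using less_cSup_iff[of ?S lam] assms(2) \<open>1 \<in> ?S\<close> unfolding lambdaD_def by blast
  next
    case False
    then show ?thesis unfolding bdd_above_def by (meson not_le)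
  qed
  then show ?thesis using that by blast
qed

text \<open>The decreasing sequence \<open>p\<^sub>h\<close> converges to a fixed point of \<open>p \<mapsto> \<psi>\<^sub>D(\<lambda> p)\<close>,
  which is at most \<open>p\<^sub>*(D, \<lambda>)\<close>.\<close>
lemma ph_tendsto_0_if_pstar_0:
  assumes l: "0 < l" and pstar: "pstar D l = 0"
  shows "ph D l \<longlonglongrightarrow> 0"
proof -
  have "decseq (ph D l)" using ph_Suc_le l by (intro decseq_SucI) auto
  then obtain L where L: "ph D l \<longlonglongrightarrow> L"
    using decseq_convergent[of "ph D l" 0] ph_nonneg l by (metis less_imp_le)
  have L_nonneg: "0 \<le> L" using L ph_nonneg l by (intro LIMSEQ_le_const) auto
  have "(\<lambda>h. ph D l (Suc h)) \<longlonglongrightarrow> psiD D (l * L)"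
    unfolding ph.simps by (intro isCont_tendsto_compose[OF isCont_psiD] tendsto_intros L)
  then have fixpoint: "L = psiD D (l * L)" using LIMSEQ_Suc[OF L] LIMSEQ_unique by blast
  have "bdd_above {p. 0 \<le> p \<and> p = psiD D (l * p)}"
  proof (rule bdd_aboveI[of _ 1])
    fix p assume "p \<in> {p. 0 \<le> p \<and> p = psiD D (l * p)}"
    then show "p \<le> 1" using psiD_le_1[of "l * p" D] l by simp
  qed
  then have "L \<le> pstar D l"
    unfolding pstar_def using fixpoint L_nonneg by (intro cSup_upper) auto
  then show ?thesis using L L_nonneg pstar by simp
qed

lemma ph_tendsto_0:
  assumes "D > 1" "0 < lam" "lam < lambdaD D"
  shows "ph D lam \<longlonglongrightarrow> 0"
proof -
  obtain l where l: "lam < l" "0 < l" "pstar D l = 0"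
    using lambdaD_witness assms by blast
  show ?thesis
  proof (rule tendsto_sandwich[of "\<lambda>_. 0" _ _ "ph D l"])
    show "\<forall>\<^sub>F h in sequentially. 0 \<le> ph D lam h"
      using ph_nonneg assms by (auto intro!: always_eventually)
    show "\<forall>\<^sub>F h in sequentially. ph D lam h \<le> ph D l h"
      using ph_mono assms l by (auto intro!: always_eventually)
  qed (use ph_tendsto_0_if_pstar_0[OF l(2,3)] in auto)
qed

section \<open>Growth of \<open>hbar\<close>\<close>

lemma doubly_exponential_decay:
  fixes f :: "nat \<Rightarrow> real"
  assumes nonneg: "\<And>h. 0 \<le> f h" and step: "\<And>h. f (Suc h) \<le> f h ^ D" and lim: "f \<longlonglongrightarrow> 0"
  obtains h0 where "\<And>k. f (h0 + k) \<le> exp (- (real D ^ k))"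
proof -
  obtain h0 where h0: "f h0 < exp (-1)"
    using order_tendstoD(2)[OF lim, of "exp (-1)"] eventually_sequentially by auto
  have "f (h0 + k) \<le> exp (- (real D ^ k))" for k
  proof (induction k)
    case 0
    show ?case using h0 by simp
  next
    case (Suc k)
    have "f (h0 + Suc k) \<le> f (h0 + k) ^ D" using step[of "h0 + k"] by simp
    also have "\<dots> \<le> exp (- (real D ^ k)) ^ D" using Suc nonneg by (intro power_mono)
    also have "\<dots> = exp (- (real D ^ Suc k))" by (simp add: exp_of_nat_mult[symmetric] mult.commute)
    finally show ?case .
  qed
  then show ?thesis using that by blast
qed

lemma powr_le_div_if_le_diff_log:
  fixes d b s :: real
  assumes "1 < d" "1 \<le> b" "s \<le> b - ln b / ln d"
  shows "d powr s \<le> d powr b / b"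
proof -
  have "d powr s \<le> d powr (b - ln b / ln d)" using assms by (intro powr_mono) auto
  also have "\<dots> = d powr b / d powr (ln b / ln d)" by (rule powr_diff)
  also have "d powr (ln b / ln d) = b" using assms by (simp add: powr_def)
  finally show ?thesis .
qed

lemma power_mult_power_pred:
  fixes c q :: real
  assumes "0 < D"
  shows "c * (c * q ^ D) ^ (D - 1) = (c * q ^ (D - 1)) ^ D"
proof -
  have "c * (c * q ^ D) ^ (D - 1) = c ^ Suc (D - 1) * q ^ (D * (D - 1))"
    by (simp add: power_mult_distrib power_mult)
  also have "\<dots> = (c * q ^ (D - 1)) ^ D"
    using assms by (simp add: power_mult_distrib power_mult[symmetric] mult.commute)
  finally show ?thesis .
qed

lemma treesize_le_power: "treesize D h \<le> D ^ (h + 1)"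
  unfolding treesize_def by (meson diff_le_self div_le_dividend le_trans)

context
  fixes D :: nat and lam :: real
  assumes D: "D > 1" and lam_pos: "0 < lam" and lam_less: "lam < lambdaD D"
begin

lemma ph_doubly_exponential_decay:
  obtains h0 where "\<And>k. lam ^ D / fact D * ph D lam (h0 + k) ^ (D - 1) \<le> exp (- (real D ^ k))"
proof (rule doubly_exponential_decay)
  let ?c = "lam ^ D / fact D"
  show "0 \<le> ?c * ph D lam h ^ (D - 1)" for h
    using lam_pos ph_nonneg by simp
  have "(\<lambda>h. ?c * ph D lam h ^ (D - 1)) \<longlonglongrightarrow> ?c * 0 ^ (D - 1)"
    by (intro tendsto_intros ph_tendsto_0 D lam_pos lam_less)
  then show "(\<lambda>h. ?c * ph D lam h ^ (D - 1)) \<longlonglongrightarrow> 0" using D by (simp add: power_0_left)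
  show "?c * ph D lam (Suc h) ^ (D - 1) \<le> (?c * ph D lam h ^ (D - 1)) ^ D" for h
  proof -
    have "ph D lam (Suc h) \<le> ?c * ph D lam h ^ D"
      using ph_Suc_le_power[of lam D h] lam_pos by (simp add: power_mult_distrib)
    then have "?c * ph D lam (Suc h) ^ (D - 1) \<le> ?c * (?c * ph D lam h ^ D) ^ (D - 1)"
      using lam_pos by (intro mult_left_mono power_mono ph_nonneg) auto
    also have "\<dots> = (?c * ph D lam h ^ (D - 1)) ^ D"
      using D by (intro power_mult_power_pred) simp
    finally show ?thesis .
  qed
qed (use that in blast)

lemma power_le_ln_if_ph_gt:
  obtains C where "C > 0"
    "\<And>n h. 1 \<le> ln (real n) \<Longrightarrow> 1 / real n < ph D lam h \<Longrightarrow> real D ^ h \<le> C * ln (real n)"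
proof -
  let ?c = "lam ^ D / fact D"
  obtain h0 where h0: "\<And>k. ?c * ph D lam (h0 + k) ^ (D - 1) \<le> exp (- (real D ^ k))"
    using ph_doubly_exponential_decay by blast
  define C where "C = real D ^ h0 * (real D - 1 + \<bar>ln ?c\<bar>)"
  have "real D ^ h \<le> C * ln (real n)"
    if n: "1 \<le> ln (real n)" and h: "1 / real n < ph D lam h" for n h
  proof (cases "h0 \<le> h")
    case True
    then obtain k where k: "h = h0 + k" using le_Suc_ex by blast
    have n_pos: "0 < real n" using n by (cases "n = 0") auto
    have "?c * (1 / real n) ^ (D - 1) < ?c * ph D lam h ^ (D - 1)"
      using h D lam_pos n_pos by (intro mult_strict_left_mono power_strict_mono) auto
    also have "\<dots> \<le> exp (- (real D ^ k))" using h0 k by simp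
    finally have "ln (?c * (1 / real n) ^ (D - 1)) < - (real D ^ k)"
      using lam_pos n_pos by (simp add: ln_less_cancel_iff[symmetric, of _ "exp _"])
    then have "real D ^ k < real (D - 1) * ln (real n) - ln ?c"
      using lam_pos n_pos by (simp add: ln_mult ln_realpow ln_div)
    also have "\<dots> \<le> (real D - 1) * ln (real n) + \<bar>ln ?c\<bar> * ln (real n)"
      using D abs_ge_minus_self[of "ln ?c"] mult_left_mono[OF n abs_ge_zero[of "ln ?c"]]
      by (simp add: of_nat_diff)
    also have "\<dots> = (real D - 1 + \<bar>ln ?c\<bar>) * ln (real n)" by (simp add: algebra_simps)
    finally have "real D ^ h0 * real D ^ k \<le> real D ^ h0 * ((real D - 1 + \<bar>ln ?c\<bar>) * ln (real n))"
      by (intro mult_left_mono) auto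
    then show ?thesis unfolding C_def k by (simp add: power_add mult.assoc)
  next
    case False
    have "1 * 1 \<le> (real D - 1 + \<bar>ln ?c\<bar>) * ln (real n)"
      using D n by (intro mult_mono) auto
    then have "real D ^ h0 * 1 \<le> C * ln (real n)"
      unfolding C_def mult.assoc by (intro mult_left_mono) auto
    moreover have "real D ^ h \<le> real D ^ h0" using False D by (intro power_increasing) auto
    ultimately show ?thesis by simp
  qed
  moreover have "C > 0" unfolding C_def using D by (intro mult_pos_pos) auto
  ultimately show ?thesis using that by blast
qed

lemma finite_ph_greater: "0 < c \<Longrightarrow> finite {h. c < ph D lam h}"
proof -
  assume "0 < c"
  then have "\<forall>\<^sub>F h in sequentially. ph D lam h < c"
    using order_tendstoD(2)[OF ph_tendsto_0[OF D lam_pos lam_less]] by blast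
  then obtain H where "\<And>h. H \<le> h \<Longrightarrow> ph D lam h < c"
    unfolding eventually_sequentially by blast
  then have "{h. c < ph D lam h} \<subseteq> {..<H}" by (force simp: not_less[symmetric])
  then show ?thesis by (rule finite_subset) simp
qed

lemma finite_hbar_set: "1 < n \<Longrightarrow> finite {h. 0 < h \<and> ln (real n) / real n < ph D lam h}"
  by (rule finite_subset[OF _ finite_ph_greater[of "ln (real n) / real n"]]) auto

lemma le_hbar: "1 < n \<Longrightarrow> 0 < H \<Longrightarrow> ln (real n) / real n < ph D lam H \<Longrightarrow> H \<le> hbar D lam n"
  unfolding hbar_def by (rule le_cSup_finite[OF finite_hbar_set]) auto

lemma ph_hbar_greater:
  assumes "1 < n" "ln (real n) / real n < ph D lam 1"
  shows "ln (real n) / real n < ph D lam (hbar D lam n)"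
proof -
  let ?S = "{h. 0 < h \<and> ln (real n) / real n < ph D lam h}"
  have "1 \<in> ?S" using assms(2) by simp
  then have "Max ?S \<in> ?S" using finite_hbar_set[OF assms(1)] by (intro Max_in) auto
  moreover have "hbar D lam n = Max ?S"
    unfolding hbar_def using finite_hbar_set[OF assms(1)] \<open>1 \<in> ?S\<close> by (intro cSup_eq_Max) auto
  ultimately show ?thesis by simp
qed

lemma eventually_ln_div_less_ph: "\<forall>\<^sub>F n in sequentially. ln (real n) / real n < ph D lam H"
proof -
  have "(\<lambda>n. ln (real n) / real n) \<longlonglongrightarrow> 0" by real_asymp
  then show ?thesis using order_tendstoD(2) ph_pos[OF lam_pos] by blast
qed

lemma filterlim_hbar_at_top: "filterlim (hbar D lam) at_top sequentially"
  unfolding filterlim_at_top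
proof
  fix H :: nat
  show "\<forall>\<^sub>F n in sequentially. H \<le> hbar D lam n"
    using eventually_ln_div_less_ph[of "max 1 H"] eventually_gt_at_top[of 1]
    by eventually_elim (use le_hbar[of _ "max 1 H"] in auto)
qed

lemma hbar_power_le_ln:
  obtains C where "C > 0" "\<forall>\<^sub>F n in sequentially. real D ^ hbar D lam n \<le> C * ln (real n)"
proof -
  obtain C where C: "C > 0"
    "\<And>n h. 1 \<le> ln (real n) \<Longrightarrow> 1 / real n < ph D lam h \<Longrightarrow> real D ^ h \<le> C * ln (real n)"
    using power_le_ln_if_ph_gt by blast
  have "\<forall>\<^sub>F n in sequentially. 1 \<le> ln (real n)" by real_asymp
  then have "\<forall>\<^sub>F n in sequentially. real D ^ hbar D lam n \<le> C * ln (real n)"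
    using eventually_ln_div_less_ph[of 1] eventually_gt_at_top[of 1]
  proof eventually_elim
    case (elim n)
    then have "1 / real n \<le> ln (real n) / real n" by (intro divide_right_mono) auto
    moreover have "ln (real n) / real n < ph D lam (hbar D lam n)"
      using elim by (intro ph_hbar_greater) auto
    ultimately show ?case using elim by (intro C(2)) auto
  qed
  with C(1) that show ?thesis by blast
qed

text \<open>The last term \<open>ln(1 - 1/D)/ln D \<le> 0\<close> of the hypothesis is dropped: it would only
  improve \<open>treesize D h \<le> D\<^sup>h\<^sup>+\<^sup>1\<close> to \<open>D\<^sup>h\<^sup>+\<^sup>1/(D - 1)\<close>.\<close>
lemma treesize_le_eps_ln:
  assumes hs: "\<forall>\<^sub>F n in sequentially.
      real (hs n) \<le> real (hbar D lam n) - ln (real (hbar D lam n)) / ln (real D)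
                     + ln (1 - 1 / real D) / ln (real D)"
    and eps: "0 < \<epsilon>"
  shows "\<forall>\<^sub>F n in sequentially. real (treesize D (hs n)) \<le> \<epsilon> * ln (real n)"
proof -
  obtain C where C: "C > 0" "\<forall>\<^sub>F n in sequentially. real D ^ hbar D lam n \<le> C * ln (real n)"
    using hbar_power_le_ln by blast
  have "filterlim (\<lambda>n. real (hbar D lam n)) at_top sequentially"
    by (rule filterlim_compose[OF filterlim_real_sequentially filterlim_hbar_at_top])
  then have "\<forall>\<^sub>F n in sequentially. max 1 (real D * C / \<epsilon>) \<le> real (hbar D lam n)"
    by (rule filterlim_at_top[THEN iffD1, rule_format])
  with C(2) hs show ?thesis
  proof eventually_elim
    case (elim n)
    define b where "b = real (hbar D lam n)"
    have b: "1 \<le> b" "real D * C / \<epsilon> \<le> b" using elim(3) unfolding b_def by auto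
    have "ln (1 - 1 / real D) \<le> 0" using D by (subst ln_le_zero_iff) auto
    then have "ln (1 - 1 / real D) / ln (real D) \<le> 0" using D by (simp add: divide_nonpos_pos)
    then have "real D powr real (hs n) \<le> real D powr b / b"
      using elim(2) D b unfolding b_def by (intro powr_le_div_if_le_diff_log) auto
    then have "real D ^ hs n \<le> real D ^ hbar D lam n / b"
      using D by (simp add: powr_realpow b_def)
    also have "\<dots> \<le> C * ln (real n) / b"
      using elim(1) b by (intro divide_right_mono) auto
    finally have "real D * real D ^ hs n \<le> real D * (C * ln (real n) / b)"
      by (intro mult_left_mono) auto
    also have "\<dots> = real D * C / b * ln (real n)" by simp
    also have "\<dots> \<le> \<epsilon> * ln (real n)"
    proof (rule mult_right_mono)
      show "real D * C / b \<le> \<epsilon>" using b eps by (simp add: divide_le_eq mult.commute)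
      show "0 \<le> ln (real n)" by (cases n) auto
    qed
    moreover have "real (treesize D (hs n)) \<le> real D * real D ^ hs n"
    proof -
      have "real (treesize D (hs n)) \<le> real (D ^ (hs n + 1))"
        using treesize_le_power by (simp only: of_nat_le_iff)
      then show ?thesis by simp
    qed
    ultimately show ?case by linarith
  qed
qed

end

section \<open>Placements of the tree\<close>

definition falling_fact :: "nat \<Rightarrow> nat \<Rightarrow> nat" where
  "falling_fact n k = (\<Prod>i<k. n - i)"

lemma falling_fact_Suc: "falling_fact n (Suc k) = falling_fact n k * (n - k)"
  unfolding falling_fact_def by simp

lemma falling_fact_add: "falling_fact n (k + l) = falling_fact n k * falling_fact (n - k) l"
  by (induction l) (simp_all add: falling_fact_Suc falling_fact_def[of _ 0] diff_diff_add)

lemma falling_fact_pos: "k \<le> n \<Longrightarrow> 0 < falling_fact n k"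
  unfolding falling_fact_def by (auto intro!: prod_pos)

lemma finite_injections: "finite (injections K n)"
  by (rule finite_subset[of _ "{0..<K} \<rightarrow>\<^sub>E {0..<n}"]) (auto simp: injections_def finite_PiE)

lemma card_injections: "card (injections K n) = falling_fact n K"
proof -
  have "injections K n = {f \<in> {0..<K} \<rightarrow>\<^sub>E {0..<n}. inj_on f {0..<K}}"
    unfolding injections_def by auto
  then show ?thesis
    using card_inj_on_subset_funcset[of "{0..<K}" "{0..<n}" "{0..<K}"]
    by (simp add: falling_fact_def atLeast0LessThan)
qed

lemma card_filter_eq_sum: "finite A \<Longrightarrow> real (card {x\<in>A. P x}) = (\<Sum>x\<in>A. if P x then 1 else 0)"
  using sum.inter_filter[of A "\<lambda>_. 1 :: real" P] by simp

lemma restrict_injection_extending: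
  assumes U: "U \<subseteq> {0..<K}" and \<sigma>: "\<sigma> \<in> injections K n" "\<forall>u\<in>U. \<sigma> u = g u"
  shows "restrict \<sigma> ({0..<K} - U) \<in> ({0..<K} - U) \<rightarrow>\<^sub>E ({0..<n} - g ` U)"
    and "inj_on (restrict \<sigma> ({0..<K} - U)) ({0..<K} - U)"
proof -
  have inj: "inj_on \<sigma> {0..<K}" and range: "\<sigma> \<in> {0..<K} \<rightarrow>\<^sub>E {0..<n}"
    using \<sigma>(1) unfolding injections_def by auto
  have "\<sigma> x \<in> {0..<n} - g ` U" if x: "x \<in> {0..<K}" "x \<notin> U" for x
  proof -
    have "\<sigma> x \<noteq> g u" if "u \<in> U" for u
      using inj_onD[OF inj, of x u] \<sigma>(2) that x U by auto
    then show ?thesis using PiE_mem[OF range x(1)] by auto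
  qed
  then show "restrict \<sigma> ({0..<K} - U) \<in> ({0..<K} - U) \<rightarrow>\<^sub>E ({0..<n} - g ` U)" by simp
  show "inj_on (restrict \<sigma> ({0..<K} - U)) ({0..<K} - U)"
    using inj_on_subset[OF inj, of "{0..<K} - U"] by (simp add: inj_on_def)
qed

lemma merge_in_injections:
  assumes U: "U \<subseteq> {0..<K}" and g: "inj_on g U" "g ` U \<subseteq> {0..<n}"
    and f: "f \<in> ({0..<K} - U) \<rightarrow>\<^sub>E ({0..<n} - g ` U)" "inj_on f ({0..<K} - U)"
  shows "(\<lambda>x. if x \<in> U then g x else f x) \<in> injections K n"
proof -
  let ?m = "\<lambda>x. if x \<in> U then g x else f x"
  have fC: "f z \<in> {0..<n} - g ` U" if "z \<in> {0..<K}" "z \<notin> U" for z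
    using PiE_mem[OF f(1), of z] that by auto
  have "?m x \<in> {0..<n}" if "x \<in> {0..<K}" for x
    using g(2) fC[of x] that by (cases "x \<in> U") auto
  moreover have "?m x = undefined" if "x \<notin> {0..<K}" for x
    using that U PiE_arb[OF f(1), of x] by auto
  ultimately have "?m \<in> {0..<K} \<rightarrow>\<^sub>E {0..<n}" by (auto simp: PiE_def Pi_def extensional_def)
  moreover have "inj_on ?m {0..<K}"
  proof (rule inj_onI)
    fix x y assume xy: "x \<in> {0..<K}" "y \<in> {0..<K}" "?m x = ?m y"
    show "x = y"
    proof (cases "x \<in> U"; cases "y \<in> U")
      assume "x \<notin> U" "y \<notin> U"
      then show ?thesis using xy inj_onD[OF f(2), of x y] by auto
    qed (use xy fC[of x] fC[of y] imageI[of x U g] imageI[of y U g] inj_onD[OF g(1)] in auto)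
  qed
  ultimately show ?thesis unfolding injections_def by simp
qed

lemma card_injections_extending:
  assumes U: "U \<subseteq> {0..<K}" and g: "inj_on g U" "g ` U \<subseteq> {0..<n}"
  shows "card {\<sigma> \<in> injections K n. \<forall>u\<in>U. \<sigma> u = g u} = falling_fact (n - card U) (K - card U)"
proof -
  let ?A = "{\<sigma> \<in> injections K n. \<forall>u\<in>U. \<sigma> u = g u}"
  define R C where "R = {0..<K} - U" and "C = {0..<n} - g ` U"
  let ?B = "{f \<in> R \<rightarrow>\<^sub>E C. inj_on f R}"
  let ?merge = "\<lambda>f x. if x \<in> U then g x else f x"
  have "bij_betw (\<lambda>\<sigma>. restrict \<sigma> R) ?A ?B"
  proof (rule bij_betw_byWitness[where f' = ?merge])
    show "\<forall>\<sigma>\<in>?A. ?merge (restrict \<sigma> R) = \<sigma>"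
    proof (intro ballI ext)
      fix \<sigma> x assume \<sigma>: "\<sigma> \<in> ?A"
      then have "\<sigma> \<in> {0..<K} \<rightarrow>\<^sub>E {0..<n}" unfolding injections_def by simp
      then have "\<sigma> x = undefined" if "x \<notin> {0..<K}" using that by (rule PiE_arb)
      then show "?merge (restrict \<sigma> R) x = \<sigma> x" using \<sigma> unfolding R_def by auto
    qed
    show "\<forall>f\<in>?B. restrict (?merge f) R = f"
    proof (intro ballI ext)
      fix f x assume "f \<in> ?B"
      then have "f x = undefined" if "x \<notin> R" using that by (auto intro: PiE_arb)
      then show "restrict (?merge f) R x = f x" unfolding R_def by auto
    qed
    show "(\<lambda>\<sigma>. restrict \<sigma> R) ` ?A \<subseteq> ?B"
    proof (rule image_subsetI)
      fix \<sigma> assume "\<sigma> \<in> ?A"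
      then show "restrict \<sigma> R \<in> ?B"
        using restrict_injection_extending[OF U, of \<sigma> n g] unfolding R_def C_def by simp
    qed
    show "?merge ` ?B \<subseteq> ?A"
    proof (rule image_subsetI)
      fix f assume "f \<in> ?B"
      then show "?merge f \<in> ?A" using merge_in_injections[OF U g, of f] unfolding R_def C_def by simp
    qed
  qed
  then have "card ?A = card ?B" by (rule bij_betw_same_card)
  also have "\<dots> = falling_fact (card C) (card R)"
    using card_inj_on_subset_funcset[of R C R] unfolding R_def C_def
    by (simp add: falling_fact_def atLeast0LessThan)
  also have "card C = n - card U"
    using g finite_subset[OF U] unfolding C_def by (simp add: card_Diff_subset card_image)
  also have "card R = K - card U"
    using U finite_subset[OF U] unfolding R_def by (simp add: card_Diff_subset)
  finally show ?thesis .
qed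

lemma parent_less: "1 \<le> j \<Longrightarrow> (j - 1) div D < (j :: nat)"
  using div_le_dividend[of "j - 1" D] by linarith

lemma tree_edges_eq: "tree_edges D h = (\<lambda>j. {(j - 1) div D, j}) ` {1..<treesize D h}"
  unfolding tree_edges_def by auto

lemma finite_tree_edges: "finite (tree_edges D h)"
  unfolding tree_edges_eq by simp

lemma card_tree_edges_le: "card (tree_edges D h) \<le> treesize D h"
  unfolding tree_edges_eq by (rule order.trans[OF card_image_le]) auto

lemma tree_edgeE:
  assumes "e \<in> tree_edges D h"
  obtains j where "1 \<le> j" "j < treesize D h" "(j - 1) div D < j" "e = {(j - 1) div D, j}"
proof -
  from assms obtain j where "j \<in> {1..<treesize D h}" "e = {(j - 1) div D, j}"
    unfolding tree_edges_eq by blast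
  then show ?thesis using that parent_less[of j D] by auto
qed

lemma tree_edge_subset: "e \<in> tree_edges D h \<Longrightarrow> e \<subseteq> {0..<treesize D h}"
  by (erule tree_edgeE) auto

definition edge_image :: "('a \<Rightarrow> 'b) \<Rightarrow> 'a set set \<Rightarrow> 'b set set" where
  "edge_image \<sigma> B = (\<lambda>e. \<sigma> ` e) ` B"

lemma edge_image_tree_subset_pairs:
  assumes "\<sigma> \<in> injections (treesize D h) n"
  shows "edge_image \<sigma> (tree_edges D h) \<subseteq> pairs n"
proof
  have inj: "inj_on \<sigma> {0..<treesize D h}" and range: "\<sigma> \<in> {0..<treesize D h} \<rightarrow>\<^sub>E {0..<n}"
    using assms unfolding injections_def by auto
  fix e' assume "e' \<in> edge_image \<sigma> (tree_edges D h)"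
  then obtain e where "e \<in> tree_edges D h" "e' = \<sigma> ` e" unfolding edge_image_def by blast
  then obtain j where j: "1 \<le> j" "j < treesize D h" "(j - 1) div D < j" "e' = \<sigma> ` {(j - 1) div D, j}"
    by (auto elim!: tree_edgeE)
  have "\<sigma> ((j - 1) div D) \<noteq> \<sigma> j" using inj_onD[OF inj, of "(j - 1) div D" j] j by auto
  moreover have "\<sigma> ((j - 1) div D) < n" "\<sigma> j < n" using range j by auto
  ultimately show "e' \<in> pairs n" unfolding pairs_def j(4) by auto
qed

lemma inj_on_image_tree_edges:
  "inj_on \<sigma> {0..<treesize D h} \<Longrightarrow> inj_on (image \<sigma>) (tree_edges D h)"
  by (rule inj_on_subset[OF inj_on_image_Pow]) (auto dest: tree_edge_subset)

section \<open>The second moment as an overlap sum\<close>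

lemma sum_Pow_power_card:
  fixes a :: "'a :: comm_semiring_1"
  assumes "finite S"
  shows "(\<Sum>A\<in>Pow S. a ^ card A) = (1 + a) ^ card S"
  using prod_add[OF assms, of "\<lambda>_. a" "\<lambda>_. 1"] by (simp add: add.commute)

lemma sum_Pow_binomial_weights:
  fixes p :: "'a :: comm_ring_1"
  assumes "finite S"
  shows "(\<Sum>A\<in>Pow S. p ^ card A * (1 - p) ^ card (S - A)) = 1"
  using prod_add[OF assms, of "\<lambda>_. p" "\<lambda>_. 1 - p"] by simp

lemma sum_binomial_weights_union_eq:
  fixes p :: "'a :: comm_ring_1"
  assumes N: "finite N" and UG: "U \<subseteq> G" and GN: "G \<subseteq> N"
  shows "(\<Sum>G0\<in>{G0\<in>Pow N. G0 \<union> U = G}. p ^ card G0 * (1 - p) ^ card (N - G0))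
      = p ^ (card G - card U) * (1 - p) ^ card (N - G)"
proof -
  have fin: "finite G" "finite U" using N UG GN by (auto intro: finite_subset)
  have img: "{G0\<in>Pow N. G0 \<union> U = G} = (\<lambda>A. (G - U) \<union> A) ` Pow U"
  proof (intro equalityI subsetI)
    fix G0 assume "G0 \<in> {G0\<in>Pow N. G0 \<union> U = G}"
    then have "G0 = (G - U) \<union> (G0 \<inter> U)" by auto
    then show "G0 \<in> (\<lambda>A. (G - U) \<union> A) ` Pow U" by blast
  qed (use UG GN in auto)
  have "inj_on (\<lambda>A. (G - U) \<union> A) (Pow U)" by (rule inj_onI) blast
  then have "(\<Sum>G0\<in>{G0\<in>Pow N. G0 \<union> U = G}. p ^ card G0 * (1 - p) ^ card (N - G0))
      = (\<Sum>A\<in>Pow U. p ^ card ((G - U) \<union> A) * (1 - p) ^ card (N - ((G - U) \<union> A)))"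
    unfolding img by (simp add: sum.reindex)
  also have "\<dots> = (\<Sum>A\<in>Pow U. (p ^ card (G - U) * (1 - p) ^ card (N - G))
                              * (p ^ card A * (1 - p) ^ card (U - A)))"
  proof (rule sum.cong[OF refl])
    fix A assume A: "A \<in> Pow U"
    have "N - ((G - U) \<union> A) = (N - G) \<union> (U - A)" using A UG GN by auto
    moreover have "card ((G - U) \<union> A) = card (G - U) + card A"
      using A fin by (intro card_Un_disjoint) (auto intro: finite_subset)
    moreover have "card ((N - G) \<union> (U - A)) = card (N - G) + card (U - A)"
      using N fin UG by (intro card_Un_disjoint) auto
    ultimately show "p ^ card ((G - U) \<union> A) * (1 - p) ^ card (N - ((G - U) \<union> A))
        = (p ^ card (G - U) * (1 - p) ^ card (N - G)) * (p ^ card A * (1 - p) ^ card (U - A))"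
      by (simp add: power_add mult_ac)
  qed
  also have "\<dots> = p ^ (card G - card U) * (1 - p) ^ card (N - G)"
    using sum_Pow_binomial_weights[OF fin(2), of p] UG fin
    by (simp add: sum_distrib_left[symmetric] card_Diff_subset)
  finally show ?thesis .
qed

lemma finite_pairs: "finite (pairs n)"
  by (rule finite_subset[of _ "Pow {0..<n}"]) (auto simp: pairs_def)

lemma set_pmf_P0: "set_pmf (P0 lam n) \<subseteq> Pow (pairs n)"
  unfolding P0_def by auto

lemma pmf_map_eq_sum:
  assumes "finite A" "set_pmf M \<subseteq> A"
  shows "pmf (map_pmf f M) y = (\<Sum>x\<in>{x\<in>A. f x = y}. pmf M x)"
proof -
  have "f -` {y} \<inter> set_pmf M = {x\<in>A. f x = y} \<inter> set_pmf M" using assms(2) by blast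
  then have "pmf (map_pmf f M) y = measure M {x\<in>A. f x = y}"
    unfolding pmf_map by (metis measure_Int_set_pmf)
  also have "\<dots> = (\<Sum>x\<in>{x\<in>A. f x = y}. pmf M x)"
    using assms(1) by (simp add: measure_measure_pmf_finite)
  finally show ?thesis .
qed

lemma pmf_P0:
  assumes lam: "0 < lam" "lam < real n" and G: "G \<subseteq> pairs n"
  shows "pmf (P0 lam n) G = (lam / n) ^ card G * (1 - lam / n) ^ card (pairs n - G)"
proof -
  define p where "p = lam / real n"
  have p: "0 < p" "p < 1" using lam by (auto simp: p_def)
  define M where "M = Pi_pmf (pairs n) False (\<lambda>_. bernoulli_pmf p)"
  have set_M: "set_pmf M = {f. \<forall>e. e \<notin> pairs n \<longrightarrow> f e = False}"
    unfolding M_def using p by (simp add: set_Pi_pmf finite_pairs PiE_dflt_def)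
  have "inj_on (\<lambda>f. {e \<in> pairs n. f e}) (set_pmf M)"
    unfolding set_M by (rule inj_onI) (auto simp: fun_eq_iff set_eq_iff)
  moreover have "(\<lambda>e. e \<in> G) \<in> set_pmf M" using G unfolding set_M by auto
  ultimately have "pmf (P0 lam n) {e \<in> pairs n. e \<in> G} = pmf M (\<lambda>e. e \<in> G)"
    unfolding P0_def M_def p_def by (rule pmf_map_inj)
  also have "{e \<in> pairs n. e \<in> G} = G" using G by auto
  also have "pmf M (\<lambda>e. e \<in> G) = (\<Prod>e\<in>pairs n. if e \<in> G then p else 1 - p)"
    unfolding M_def using p G by (subst pmf_Pi') (auto simp: finite_pairs intro!: prod.cong)
  also have "\<dots> = p ^ card G * (1 - p) ^ card (pairs n - G)"
    using G by (simp add: prod.If_cases finite_pairs Int_absorb1 Diff_eq)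
  finally show ?thesis unfolding p_def .
qed

definition planted_LR :: "real \<Rightarrow> nat \<Rightarrow> nat set set \<Rightarrow> nat set set \<Rightarrow> real" where
  "planted_LR lam n U G = (if U \<subseteq> G then 1 / (lam / n) ^ card U else 0)"

lemma pmf_P0_union:
  assumes lam: "0 < lam" "lam < real n" and U: "U \<subseteq> pairs n"
  shows "pmf (map_pmf (\<lambda>G0. G0 \<union> U) (P0 lam n)) G = pmf (P0 lam n) G * planted_LR lam n U G"
proof (cases "G \<subseteq> pairs n")
  case G: True
  let ?p = "lam / real n" and ?N = "pairs n"
  have "pmf (map_pmf (\<lambda>G0. G0 \<union> U) (P0 lam n)) G
      = (\<Sum>G0\<in>{G0\<in>Pow ?N. G0 \<union> U = G}. pmf (P0 lam n) G0)"
    by (rule pmf_map_eq_sum) (simp_all add: finite_pairs set_pmf_P0)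
  also have "\<dots> = (\<Sum>G0\<in>{G0\<in>Pow ?N. G0 \<union> U = G}. ?p ^ card G0 * (1 - ?p) ^ card (?N - G0))"
    using lam by (intro sum.cong) (auto simp: pmf_P0)
  also have "\<dots> = (if U \<subseteq> G then pmf (P0 lam n) G / ?p ^ card U else 0)"
  proof (cases "U \<subseteq> G")
    case True
    have "card U \<le> card G" using True G by (intro card_mono) (auto intro: finite_subset finite_pairs)
    then have "?p ^ card G = ?p ^ (card G - card U) * ?p ^ card U"
      by (simp add: power_add[symmetric])
    then show ?thesis
      using True G lam sum_binomial_weights_union_eq[OF finite_pairs True G, of ?p]
      by (simp add: pmf_P0)
  next
    case False
    then have empty: "{G0\<in>Pow ?N. G0 \<union> U = G} = {}" by auto
    show ?thesis unfolding empty using False by simp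
  qed
  also have "\<dots> = pmf (P0 lam n) G * planted_LR lam n U G" by (simp add: planted_LR_def)
  finally show ?thesis .
next
  case False
  then have "G \<notin> set_pmf (P0 lam n)" "G \<notin> (\<lambda>G0. G0 \<union> U) ` set_pmf (P0 lam n)"
    using set_pmf_P0[of lam n] U by blast+
  then have "pmf (P0 lam n) G = 0" "G \<notin> (\<lambda>G0. G0 \<union> U) ` set_pmf (P0 lam n)"
    by (simp_all add: set_pmf_iff)
  then show ?thesis by (simp add: pmf_map_outside)
qed

lemma sum_P0_supersets:
  assumes lam: "0 < lam" "lam < real n" and U: "U \<subseteq> pairs n"
  shows "(\<Sum>G\<in>Pow (pairs n). if U \<subseteq> G then pmf (P0 lam n) G else 0) = (lam / n) ^ card U"
proof -
  have "1 = (\<Sum>G\<in>Pow (pairs n). pmf (map_pmf (\<lambda>G0. G0 \<union> U) (P0 lam n)) G)"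
    using set_pmf_P0 U by (intro sum_pmf_eq_1[symmetric]) (auto simp: finite_pairs)
  also have "\<dots> = (\<Sum>G\<in>Pow (pairs n). if U \<subseteq> G then pmf (P0 lam n) G else 0) / (lam / n) ^ card U"
    unfolding pmf_P0_union[OF assms] sum_divide_distrib by (intro sum.cong) (auto simp: planted_LR_def)
  finally show ?thesis using lam by (simp add: field_simps)
qed

lemma sum_P0_planted_LR_mult:
  assumes lam: "0 < lam" "lam < real n" and A: "A \<subseteq> pairs n" and B: "B \<subseteq> pairs n"
  shows "(\<Sum>G\<in>Pow (pairs n). planted_LR lam n A G * planted_LR lam n B G * pmf (P0 lam n) G)
       = (n / lam) ^ card (A \<inter> B)"
proof -
  let ?p = "lam / real n"
  have fin: "finite A" "finite B" using A B finite_subset[OF _ finite_pairs] by auto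
  have "(\<Sum>G\<in>Pow (pairs n). planted_LR lam n A G * planted_LR lam n B G * pmf (P0 lam n) G)
      = (\<Sum>G\<in>Pow (pairs n). if A \<union> B \<subseteq> G then pmf (P0 lam n) G else 0) / (?p ^ card A * ?p ^ card B)"
    unfolding sum_divide_distrib by (intro sum.cong) (auto simp: planted_LR_def)
  also have "\<dots> = ?p ^ card (A \<union> B) / (?p ^ card A * ?p ^ card B)"
    using sum_P0_supersets[OF lam, of "A \<union> B"] A B lam by simp
  also have "?p ^ card A * ?p ^ card B = ?p ^ card (A \<union> B) * ?p ^ card (A \<inter> B)"
    using card_Un_Int[OF fin] by (simp add: power_add[symmetric])
  also have "?p ^ card (A \<union> B) / (?p ^ card (A \<union> B) * ?p ^ card (A \<inter> B)) = (1 / ?p) ^ card (A \<inter> B)"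
  proof -
    have "q ^ u / (q ^ u * q ^ i) = (1 / q) ^ i" if "q \<noteq> 0" for q :: real and u i :: nat
      using that by (simp add: power_one_over)
    moreover have "?p \<noteq> 0" using lam by simp
    ultimately show ?thesis by blast
  qed
  also have "1 / ?p = n / lam" by simp
  finally show ?thesis .
qed

lemma P1_eq_bind_injections:
  "P1 D h lam n = pmf_of_set (injections (treesize D h) n) \<bind>
     (\<lambda>\<sigma>. map_pmf (\<lambda>G0. G0 \<union> edge_image \<sigma> (tree_edges D h)) (P0 lam n))"
  unfolding P1_def map_pmf_def edge_image_def by (rule bind_commute_pmf)

context
  fixes D h n :: nat and lam :: real
  assumes lam_pos: "0 < lam" and lam_less: "lam < real n" and treesize_le: "treesize D h \<le> n"
begin

lemma injections_nonempty: "injections (treesize D h) n \<noteq> {}"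
  using card_injections[of "treesize D h" n] falling_fact_pos[OF treesize_le] by auto

lemma LR_eq:
  assumes G: "G \<subseteq> pairs n"
  shows "LR D h lam n G = (\<Sum>\<sigma>\<in>injections (treesize D h) n.
            planted_LR lam n (edge_image \<sigma> (tree_edges D h)) G) / card (injections (treesize D h) n)"
proof -
  let ?I = "injections (treesize D h) n" and ?A = "\<lambda>\<sigma>. edge_image \<sigma> (tree_edges D h)"
  have "pmf (P1 D h lam n) G = (\<Sum>\<sigma>\<in>?I. pmf (map_pmf (\<lambda>G0. G0 \<union> ?A \<sigma>) (P0 lam n)) G) / card ?I"
    unfolding P1_eq_bind_injections
    by (rule pmf_bind_pmf_of_set[OF injections_nonempty finite_injections])
  also have "\<dots> = pmf (P0 lam n) G * (\<Sum>\<sigma>\<in>?I. planted_LR lam n (?A \<sigma>) G) / card ?I"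
    unfolding sum_distrib_left
    by (intro arg_cong2[where f = "(/)"] sum.cong refl)
       (simp add: pmf_P0_union[OF lam_pos lam_less edge_image_tree_subset_pairs])
  finally show ?thesis
    unfolding LR_def using pmf_P0[OF lam_pos lam_less G] lam_pos lam_less by simp
qed

lemma second_moment_eq:
  "second_moment D h lam n =
     (\<Sum>\<sigma>\<in>injections (treesize D h) n. \<Sum>\<tau>\<in>injections (treesize D h) n.
        (n / lam) ^ card (edge_image \<sigma> (tree_edges D h) \<inter> edge_image \<tau> (tree_edges D h)))
     / (card (injections (treesize D h) n))\<^sup>2"
proof -
  let ?I = "injections (treesize D h) n" and ?N = "pairs n"
  let ?L = "\<lambda>\<sigma>. planted_LR lam n (edge_image \<sigma> (tree_edges D h))"
  have "second_moment D h lam n = (\<Sum>G\<in>Pow ?N. (LR D h lam n G)\<^sup>2 * pmf (P0 lam n) G)"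
    unfolding second_moment_def
    by (rule integral_measure_pmf_real) (use finite_pairs set_pmf_P0[of lam n] in auto)
  also have "\<dots> = (\<Sum>G\<in>Pow ?N.
      (\<Sum>\<sigma>\<in>?I. \<Sum>\<tau>\<in>?I. ?L \<sigma> G * ?L \<tau> G * pmf (P0 lam n) G) / (card ?I)\<^sup>2)"
  proof (intro sum.cong refl)
    fix G assume "G \<in> Pow ?N"
    then have "(LR D h lam n G)\<^sup>2 * pmf (P0 lam n) G
        = (\<Sum>\<sigma>\<in>?I. ?L \<sigma> G) * (\<Sum>\<tau>\<in>?I. ?L \<tau> G) * pmf (P0 lam n) G / (card ?I)\<^sup>2"
      by (simp add: LR_eq power2_eq_square)
    then show "(LR D h lam n G)\<^sup>2 * pmf (P0 lam n) G
        = (\<Sum>\<sigma>\<in>?I. \<Sum>\<tau>\<in>?I. ?L \<sigma> G * ?L \<tau> G * pmf (P0 lam n) G) / (card ?I)\<^sup>2"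
      by (simp add: sum_distrib_left sum_distrib_right mult_ac)
  qed
  also have "\<dots> = (\<Sum>G\<in>Pow ?N. \<Sum>\<sigma>\<in>?I. \<Sum>\<tau>\<in>?I. ?L \<sigma> G * ?L \<tau> G * pmf (P0 lam n) G)
                    / (card ?I)\<^sup>2"
    by (rule sum_divide_distrib[symmetric])
  also have "\<dots> = (\<Sum>\<sigma>\<in>?I. \<Sum>\<tau>\<in>?I. \<Sum>G\<in>Pow ?N. ?L \<sigma> G * ?L \<tau> G * pmf (P0 lam n) G)
                    / (card ?I)\<^sup>2"
    by (subst sum.swap, subst (2) sum.swap) (rule refl)
  also have "\<dots> = (\<Sum>\<sigma>\<in>?I. \<Sum>\<tau>\<in>?I.
      (n / lam) ^ card (edge_image \<sigma> (tree_edges D h) \<inter> edge_image \<tau> (tree_edges D h))) / (card ?I)\<^sup>2"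
    using edge_image_tree_subset_pairs
    by (intro arg_cong2[where f = "(/)"] sum.cong refl sum_P0_planted_LR_mult[OF lam_pos lam_less]) auto
  finally show ?thesis .
qed

end

section \<open>Embeddings of subforests of the tree\<close>

definition tree_embeddings :: "nat \<Rightarrow> nat \<Rightarrow> nat set set \<Rightarrow> (nat \<Rightarrow> nat) set" where
  "tree_embeddings D h B = {\<phi> \<in> \<Union>B \<rightarrow>\<^sub>E {0..<treesize D h}.
      inj_on \<phi> (\<Union>B) \<and> (\<forall>e\<in>B. \<phi> ` e \<in> tree_edges D h)}"

definition tree_neighbours :: "nat \<Rightarrow> nat \<Rightarrow> nat \<Rightarrow> nat set" where
  "tree_neighbours D h a = {b. {a, b} \<in> tree_edges D h}"

lemma tree_neighbours_subset: "tree_neighbours D h a \<subseteq> {0..<treesize D h}"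
  unfolding tree_neighbours_def using tree_edge_subset by blast

lemma finite_tree_neighbours: "finite (tree_neighbours D h a)"
  using tree_neighbours_subset by (rule finite_subset) simp

lemma card_tree_neighbours_le:
  assumes "D > 0"
  shows "card (tree_neighbours D h a) \<le> D + 1"
proof -
  \<comment> \<open>in the heap labelling, the parent of \<open>a\<close> and its children \<open>a D + 1, \<dots>, a D + D\<close>\<close>
  have "tree_neighbours D h a \<subseteq> insert ((a - 1) div D) {a * D + 1..a * D + D}"
  proof
    fix b assume "b \<in> tree_neighbours D h a"
    then obtain i where i: "1 \<le> i" "{a, b} = {(i - 1) div D, i}"
      unfolding tree_neighbours_def tree_edges_eq by auto
    then consider "a = (i - 1) div D" "b = i" | "a = i" "b = (i - 1) div D"
      by (auto simp: doubleton_eq_iff)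
    then show "b \<in> insert ((a - 1) div D) {a * D + 1..a * D + D}"
    proof cases
      case 1
      have "(i - 1) div D * D + (i - 1) mod D = i - 1" by (rule div_mult_mod_eq)
      moreover have "(i - 1) mod D < D" using assms by simp
      moreover have "a * D = (i - 1) div D * D" "b = i" using 1 by simp_all
      ultimately have "a * D + 1 \<le> b" "b \<le> a * D + D" using i(1) by linarith+
      then show ?thesis by simp
    qed simp
  qed
  then have "card (tree_neighbours D h a) \<le> card (insert ((a - 1) div D) {a * D + 1..a * D + D})"
    by (intro card_mono) auto
  also have "\<dots> \<le> D + 1" by (simp add: card_insert_if)
  finally show ?thesis .
qed

lemma Union_tree_edges_subset: "B \<subseteq> tree_edges D h \<Longrightarrow> \<Union>B \<subseteq> {0..<treesize D h}"
  using tree_edge_subset by blast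

lemma finite_Union_tree_edges: "B \<subseteq> tree_edges D h \<Longrightarrow> finite (\<Union>B)"
  by (meson Union_tree_edges_subset finite_atLeastLessThan finite_subset)

lemma finite_tree_embeddings: "B \<subseteq> tree_edges D h \<Longrightarrow> finite (tree_embeddings D h B)"
  by (rule finite_subset[of _ "\<Union>B \<rightarrow>\<^sub>E {0..<treesize D h}"])
     (auto simp: tree_embeddings_def finite_Union_tree_edges intro!: finite_PiE)

lemma tree_embeddings_empty: "tree_embeddings D h {} = {\<lambda>_. undefined}"
  unfolding tree_embeddings_def by simp

lemma restrict_in_tree_embeddings:
  assumes "\<phi> \<in> tree_embeddings D h (insert e B)"
  shows "restrict \<phi> (\<Union>B) \<in> tree_embeddings D h B"
proof -
  have "restrict \<phi> (\<Union>B) ` e' = \<phi> ` e'" if "e' \<in> B" for e'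
    using that by auto
  with assms show ?thesis
    unfolding tree_embeddings_def by (auto simp: inj_on_def)
qed

lemma tree_embedding_edge:
  assumes "\<phi> \<in> tree_embeddings D h (insert {a, j} B)"
  shows "\<phi> a < treesize D h" "\<phi> j \<in> tree_neighbours D h (\<phi> a)"
  using assms unfolding tree_embeddings_def tree_neighbours_def by auto

lemma inj_on_restrict_endpoints:
  "inj_on (\<lambda>\<phi>. (restrict \<phi> (\<Union>B), \<phi> a, \<phi> j)) (tree_embeddings D h (insert {a, j} B))"
proof (rule inj_onI)
  fix \<phi> \<psi>
  assume "\<phi> \<in> tree_embeddings D h (insert {a, j} B)" "\<psi> \<in> tree_embeddings D h (insert {a, j} B)"
  then have "\<phi> \<in> extensional (insert a (insert j (\<Union>B)))" "\<psi> \<in> extensional (insert a (insert j (\<Union>B)))"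
    unfolding tree_embeddings_def by (auto simp: PiE_def)
  moreover assume "(restrict \<phi> (\<Union>B), \<phi> a, \<phi> j) = (restrict \<psi> (\<Union>B), \<psi> a, \<psi> j)"
  then have eq: "restrict \<phi> (\<Union>B) = restrict \<psi> (\<Union>B)" "\<phi> a = \<psi> a" "\<phi> j = \<psi> j" by simp_all
  have "\<phi> x = \<psi> x" if "x \<in> insert a (insert j (\<Union>B))" for x
  proof (cases "x \<in> \<Union>B")
    case True
    then show ?thesis using fun_cong[OF eq(1), of x] by simp
  qed (use that eq in auto)
  ultimately show "\<phi> = \<psi>" by (rule extensionalityI)
qed

lemma card_tree_embeddings_insert_attached:
  assumes "D > 0" "a \<in> \<Union>B" "B \<subseteq> tree_edges D h"
  shows "card (tree_embeddings D h (insert {a, j} B)) \<le> card (tree_embeddings D h B) * (D + 1)"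
proof -
  let ?R = "\<lambda>\<phi>. (restrict \<phi> (\<Union>B), \<phi> a, \<phi> j)"
  let ?S = "SIGMA \<psi>:tree_embeddings D h B. {\<psi> a} \<times> tree_neighbours D h (\<psi> a)"
  have "?R ` tree_embeddings D h (insert {a, j} B) \<subseteq> ?S"
    using assms(2) by (auto simp: restrict_in_tree_embeddings tree_embedding_edge)
  moreover have "finite ?S"
    using assms(3) by (intro finite_SigmaI finite_tree_embeddings) (auto simp: finite_tree_neighbours)
  ultimately have "card (?R ` tree_embeddings D h (insert {a, j} B)) \<le> card ?S"
    by (intro card_mono)
  then have "card (tree_embeddings D h (insert {a, j} B)) \<le> card ?S"
    by (simp add: card_image[OF inj_on_restrict_endpoints])
  also have "\<dots> = (\<Sum>\<psi>\<in>tree_embeddings D h B. card (tree_neighbours D h (\<psi> a)))"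
    using assms(3) by (simp add: card_SigmaI finite_tree_embeddings finite_tree_neighbours card_cartesian_product)
  also have "\<dots> \<le> card (tree_embeddings D h B) * (D + 1)"
    using sum_bounded_above[of "tree_embeddings D h B" _ "D + 1"] card_tree_neighbours_le[OF assms(1)]
    by (simp add: mult.commute)
  finally show ?thesis .
qed

lemma card_tree_embeddings_insert:
  assumes "D > 0" "B \<subseteq> tree_edges D h"
  shows "card (tree_embeddings D h (insert {a, j} B))
           \<le> card (tree_embeddings D h B) * (treesize D h * (D + 1))"
proof -
  let ?R = "\<lambda>\<phi>. (restrict \<phi> (\<Union>B), \<phi> a, \<phi> j)"
  let ?S = "tree_embeddings D h B \<times> (SIGMA b:{0..<treesize D h}. tree_neighbours D h b)"
  have "?R ` tree_embeddings D h (insert {a, j} B) \<subseteq> ?S"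
    by (auto simp: restrict_in_tree_embeddings tree_embedding_edge)
  moreover have "finite ?S"
    using assms(2) by (intro finite_cartesian_product finite_SigmaI finite_tree_embeddings)
                      (auto simp: finite_tree_neighbours)
  ultimately have "card (?R ` tree_embeddings D h (insert {a, j} B)) \<le> card ?S"
    by (intro card_mono)
  then have "card (tree_embeddings D h (insert {a, j} B)) \<le> card ?S"
    by (simp add: card_image[OF inj_on_restrict_endpoints])
  also have "\<dots> = card (tree_embeddings D h B) * (\<Sum>b<treesize D h. card (tree_neighbours D h b))"
    by (simp add: card_cartesian_product card_SigmaI finite_tree_neighbours atLeast0LessThan)
  also have "(\<Sum>b<treesize D h. card (tree_neighbours D h b)) \<le> treesize D h * (D + 1)"
    using sum_bounded_above[of "{..<treesize D h}" _ "D + 1"] card_tree_neighbours_le[OF assms(1)] by simp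
  finally show ?thesis by simp
qed

text \<open>Take the edge of \<open>B\<close> with the largest child \<open>j\<close>: every other edge of \<open>B\<close> has both
  endpoints below \<open>j\<close>, so \<open>j\<close> is a leaf of \<open>B\<close>.\<close>
lemma tree_subforest_leaf:
  assumes B: "B \<subseteq> tree_edges D h" "B \<noteq> {}"
  obtains a j B0 where "B = insert {a, j} B0" "{a, j} \<notin> B0" "j \<notin> \<Union>B0" "a \<noteq> j"
proof -
  define J where "J = {i. 1 \<le> i \<and> {(i - 1) div D, i} \<in> B}"
  have J_edge: "\<exists>i\<in>J. e = {(i - 1) div D, i}" if "e \<in> B" for e
  proof -
    from that B(1) have "e \<in> tree_edges D h" by blast
    then obtain i where "1 \<le> i" "e = {(i - 1) div D, i}" by (rule tree_edgeE) blast
    then show ?thesis using that unfolding J_def by auto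
  qed
  have "J \<subseteq> {0..<treesize D h}" using B(1) tree_edge_subset unfolding J_def by blast
  then have "finite J" by (rule finite_subset) simp
  moreover have "J \<noteq> {}" using J_edge B(2) by blast
  ultimately have j: "Max J \<in> J" "\<And>i. i \<in> J \<Longrightarrow> i \<le> Max J" by simp_all
  define j a where "j = Max J" and "a = (j - 1) div D"
  have "a < j" using j(1) parent_less unfolding J_def a_def j_def by blast
  have "{a, j} \<in> B" using j(1) unfolding J_def a_def j_def by simp
  moreover have "j \<notin> \<Union>(B - {{a, j}})"
  proof
    assume "j \<in> \<Union>(B - {{a, j}})"
    then obtain i where i: "i \<in> J" "j \<in> {(i - 1) div D, i}" "{(i - 1) div D, i} \<noteq> {a, j}"
      using J_edge by blast
    then have "i \<le> j" "(i - 1) div D < i" using j(2) parent_less unfolding J_def j_def by auto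
    with i show False unfolding a_def by auto
  qed
  ultimately show ?thesis using that[of a j "B - {{a, j}}"] \<open>a < j\<close> by (simp add: insert_absorb)
qed

lemma exists_tree_embedding:
  assumes \<sigma>: "\<sigma> \<in> injections (treesize D h) n" and \<tau>: "\<tau> \<in> injections (treesize D h) n"
    and B: "B \<subseteq> tree_edges D h" and sub: "edge_image \<sigma> B \<subseteq> edge_image \<tau> (tree_edges D h)"
  shows "\<exists>\<phi>\<in>tree_embeddings D h B. \<forall>u\<in>\<Union>B. \<sigma> u = \<tau> (\<phi> u)"
proof -
  let ?K = "treesize D h"
  have inj: "inj_on \<sigma> {0..<?K}" "inj_on \<tau> {0..<?K}" using \<sigma> \<tau> unfolding injections_def by auto
  define \<phi> where "\<phi> = restrict (\<lambda>u. inv_into {0..<?K} \<tau> (\<sigma> u)) (\<Union>B)"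
  have edge: "\<exists>e'\<in>tree_edges D h. \<sigma> ` e = \<tau> ` e'" if "e \<in> B" for e
    using sub that unfolding edge_image_def by blast
  have in_range: "\<sigma> u \<in> \<tau> ` {0..<?K}" if "u \<in> \<Union>B" for u
  proof -
    from that obtain e where e: "e \<in> B" "u \<in> e" by blast
    with edge obtain e' where "e' \<in> tree_edges D h" "\<sigma> ` e = \<tau> ` e'" by blast
    then show ?thesis using e(2) tree_edge_subset by blast
  qed
  have agree: "\<sigma> u = \<tau> (\<phi> u)" if "u \<in> \<Union>B" for u
    using in_range[OF that] that unfolding \<phi>_def by (simp add: f_inv_into_f)
  have "inv_into {0..<?K} \<tau> (\<sigma> u) \<in> {0..<?K}" if "u \<in> \<Union>B" for u
    using in_range[OF that] by (rule inv_into_into)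
  then have "\<phi> \<in> \<Union>B \<rightarrow>\<^sub>E {0..<?K}" unfolding \<phi>_def by (simp add: restrict_PiE_iff)
  moreover have "inj_on \<phi> (\<Union>B)"
  proof (rule inj_onI)
    fix u v assume uv: "u \<in> \<Union>B" "v \<in> \<Union>B" "\<phi> u = \<phi> v"
    then have "\<sigma> u = \<sigma> v" using agree[of u] agree[of v] by simp
    then show "u = v" using inj_onD[OF inj(1)] Union_tree_edges_subset[OF B] uv(1,2) by blast
  qed
  moreover have "\<phi> ` e \<in> tree_edges D h" if e: "e \<in> B" for e
  proof -
    obtain e' where e': "e' \<in> tree_edges D h" "\<sigma> ` e = \<tau> ` e'" using edge[OF e] by blast
    have "\<phi> ` e = inv_into {0..<?K} \<tau> ` \<sigma> ` e"
      using e unfolding \<phi>_def by (auto simp: image_image)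
    also have "\<dots> = e'"
      unfolding e'(2) using inj(2) tree_edge_subset[OF e'(1)] by (rule inv_into_image_cancel)
    finally show ?thesis using e'(1) by simp
  qed
  ultimately show ?thesis using agree unfolding tree_embeddings_def by blast
qed

section \<open>Bounding the second moment\<close>

text \<open>Bounds the contribution of the edge set \<open>B \<subseteq> \<Gamma>\<close> to \<open>E\<^sub>0(L\<^sup>2)\<close>.\<close>
definition embedding_weight :: "nat \<Rightarrow> nat \<Rightarrow> nat \<Rightarrow> real \<Rightarrow> nat set set \<Rightarrow> real" where
  "embedding_weight D h n x B =
     x ^ card B * card (tree_embeddings D h B) / falling_fact n (card (\<Union>B))"

lemma power_Suc_mult_divide_le:
  fixes x E E0 c W d :: real
  assumes "0 \<le> x" "0 < W" "0 < d" "E \<le> E0 * c"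
  shows "x ^ Suc m * E / (W * d) \<le> x ^ m * E0 / W * (x * c / d)"
proof -
  have "x ^ Suc m * E / (W * d) \<le> x ^ Suc m * (E0 * c) / (W * d)"
    using assms by (intro divide_right_mono mult_left_mono) auto
  also have "\<dots> = x ^ m * E0 / W * (x * c / d)" by (simp add: field_simps)
  finally show ?thesis .
qed

lemma divide_le_double_divide:
  fixes c n d :: real
  assumes "0 \<le> c" "0 < n" "n / 2 \<le> d"
  shows "c / d \<le> 2 * c / n"
proof -
  have "c / d \<le> c / (n / 2)" using assms by (intro divide_left_mono) auto
  then show ?thesis by (simp add: mult.commute)
qed

context
  fixes D h n :: nat and x :: real
  assumes D_pos: "0 < D" and treesize_le: "2 * treesize D h \<le> n" and x_nonneg: "0 \<le> x"
begin

lemma embedding_weight_nonneg: "0 \<le> embedding_weight D h n x B"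
  unfolding embedding_weight_def using x_nonneg by simp

lemma embedding_weight_empty: "embedding_weight D h n x {} = 1"
  unfolding embedding_weight_def by (simp add: tree_embeddings_empty falling_fact_def)

lemma embedding_weight_insert_attached:
  assumes B: "B \<subseteq> tree_edges D h" and e: "{a, j} \<in> tree_edges D h" "{a, j} \<notin> B"
    and a: "a \<in> \<Union>B" and j: "j \<notin> \<Union>B"
  shows "embedding_weight D h n x (insert {a, j} B)
           \<le> embedding_weight D h n x B * (2 * x * (real D + 1) / n)"
proof -
  let ?v = "card (\<Union>B)" and ?E = "\<lambda>B. real (card (tree_embeddings D h B))"
  have fin: "finite B" "finite (\<Union>B)"
    using finite_subset[OF B finite_tree_edges] finite_Union_tree_edges[OF B] by auto
  have "\<Union>(insert {a, j} B) = insert j (\<Union>B)" using a by auto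
  then have card_V: "card (\<Union>(insert {a, j} B)) = Suc ?v" using fin j by simp
  moreover have "card (\<Union>(insert {a, j} B)) \<le> treesize D h"
    using Union_tree_edges_subset[of "insert {a, j} B"] B e card_mono[of "{0..<treesize D h}"] by fastforce
  ultimately have v: "real n / 2 \<le> real n - real ?v" "?v < n" using treesize_le by linarith+
  have W: "0 < real (falling_fact n ?v)" using falling_fact_pos[of ?v n] v(2) by simp
  have d: "0 < real n - real ?v" using v(2) by simp
  have "real (card (tree_embeddings D h (insert {a, j} B))) \<le> real (card (tree_embeddings D h B) * (D + 1))"
    using card_tree_embeddings_insert_attached[OF D_pos a B, of j] by (simp only: of_nat_le_iff)
  then have E: "?E (insert {a, j} B) \<le> ?E B * (real D + 1)" by (simp add: algebra_simps)
  have "embedding_weight D h n x (insert {a, j} B)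
      = x ^ Suc (card B) * ?E (insert {a, j} B) / (real (falling_fact n ?v) * (real n - real ?v))"
    unfolding embedding_weight_def card_V falling_fact_Suc using fin e v by (simp add: of_nat_diff)
  also have "\<dots> \<le> embedding_weight D h n x B * (x * (real D + 1) / (real n - real ?v))"
    unfolding embedding_weight_def by (rule power_Suc_mult_divide_le[OF x_nonneg W d E])
  also have "\<dots> \<le> embedding_weight D h n x B * (2 * x * (real D + 1) / n)"
    using divide_le_double_divide[of "x * (real D + 1)" n "real n - real ?v"] v d x_nonneg
    by (intro mult_left_mono embedding_weight_nonneg) (simp_all add: mult.assoc)
  finally show ?thesis .
qed

lemma embedding_weight_insert_detached:
  assumes B: "B \<subseteq> tree_edges D h" and e: "{a, j} \<in> tree_edges D h" "{a, j} \<notin> B"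
    and a: "a \<notin> \<Union>B" and j: "j \<notin> \<Union>B" and "a \<noteq> j"
  shows "embedding_weight D h n x (insert {a, j} B)
           \<le> embedding_weight D h n x B * (2 * x * (real D + 1) / n) * (2 * real (treesize D h) / n)"
proof -
  let ?v = "card (\<Union>B)" and ?E = "\<lambda>B. real (card (tree_embeddings D h B))" and ?K = "treesize D h"
  have fin: "finite B" "finite (\<Union>B)"
    using finite_subset[OF B finite_tree_edges] finite_Union_tree_edges[OF B] by auto
  have "\<Union>(insert {a, j} B) = insert a (insert j (\<Union>B))" by auto
  then have card_V: "card (\<Union>(insert {a, j} B)) = Suc (Suc ?v)" using fin a j \<open>a \<noteq> j\<close> by simp
  moreover have "card (\<Union>(insert {a, j} B)) \<le> ?K"
    using Union_tree_edges_subset[of "insert {a, j} B"] B e card_mono[of "{0..<treesize D h}"] by fastforce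
  ultimately have v: "real n / 2 \<le> real n - real ?v" "real n / 2 \<le> real n - real (Suc ?v)" "Suc ?v < n"
    using treesize_le by linarith+
  have W: "0 < real (falling_fact n ?v)" using falling_fact_pos[of ?v n] v(3) by simp
  have d: "0 < real n - real ?v" "0 < real n - real (Suc ?v)" using v(3) by simp_all
  have "real (card (tree_embeddings D h (insert {a, j} B)))
      \<le> real (card (tree_embeddings D h B) * (?K * (D + 1)))"
    using card_tree_embeddings_insert[OF D_pos B, of a j] by (simp only: of_nat_le_iff)
  then have E: "?E (insert {a, j} B) \<le> ?E B * (?K * (real D + 1))" by (simp add: algebra_simps)
  have "embedding_weight D h n x (insert {a, j} B)
      = x ^ Suc (card B) * ?E (insert {a, j} B)
        / (real (falling_fact n ?v) * ((real n - real ?v) * (real n - real (Suc ?v))))"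
    unfolding embedding_weight_def card_V falling_fact_Suc using fin e v
    by (simp add: of_nat_diff mult.assoc)
  also have "\<dots> \<le> embedding_weight D h n x B
      * (x * (?K * (real D + 1)) / ((real n - real ?v) * (real n - real (Suc ?v))))"
    unfolding embedding_weight_def using d by (intro power_Suc_mult_divide_le[OF x_nonneg W _ E]) simp
  also have "x * (?K * (real D + 1)) / ((real n - real ?v) * (real n - real (Suc ?v)))
      = (x * (real D + 1) / (real n - real ?v)) * (?K / (real n - real (Suc ?v)))"
    by simp
  also have "embedding_weight D h n x B * \<dots>
      \<le> embedding_weight D h n x B * ((2 * x * (real D + 1) / n) * (2 * ?K / n))"
    using divide_le_double_divide[of "x * (real D + 1)" n "real n - real ?v"]
          divide_le_double_divide[of "real ?K" n "real n - real (Suc ?v)"] v d x_nonneg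
    by (intro mult_left_mono mult_mono embedding_weight_nonneg) (simp_all add: mult.assoc)
  finally show ?thesis by (simp add: mult.assoc)
qed

lemma embedding_weight_insert_leaf:
  assumes B: "B \<subseteq> tree_edges D h" and e: "{a, j} \<in> tree_edges D h" "{a, j} \<notin> B"
    and j: "j \<notin> \<Union>B" and "a \<noteq> j"
  shows "embedding_weight D h n x (insert {a, j} B)
           \<le> embedding_weight D h n x B * (2 * x * (real D + 1) / n)"
proof (cases "a \<in> \<Union>B")
  case True
  show ?thesis using embedding_weight_insert_attached[OF B e True j] .
next
  case False
  let ?\<alpha> = "2 * x * (real D + 1) / n" and ?\<beta> = "2 * real (treesize D h) / n"
  have "2 * real (treesize D h) \<le> real n"
    using treesize_le of_nat_le_iff[of "2 * treesize D h" n, where 'a = real] by simp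
  then have "?\<beta> \<le> 1" by (cases "n = 0") (simp_all add: divide_le_eq_1)
  moreover have "0 \<le> embedding_weight D h n x B * ?\<alpha>"
    using x_nonneg embedding_weight_nonneg by simp
  ultimately have "embedding_weight D h n x B * ?\<alpha> * ?\<beta> \<le> embedding_weight D h n x B * ?\<alpha> * 1"
    by (rule mult_left_mono)
  then show ?thesis
    using embedding_weight_insert_detached[OF B e False j \<open>a \<noteq> j\<close>] unfolding mult_1_right
    by linarith
qed

lemma embedding_weight_le:
  assumes "B \<subseteq> tree_edges D h" "B \<noteq> {}"
  shows "embedding_weight D h n x B
           \<le> 2 * real (treesize D h) / n * (2 * x * (real D + 1) / n) ^ card B"
  using assms
proof (induction "card B" arbitrary: B)
  case 0
  then show ?case using finite_subset[OF _ finite_tree_edges] by auto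
next
  case (Suc m)
  let ?\<alpha> = "2 * x * (real D + 1) / n" and ?\<beta> = "2 * real (treesize D h) / n"
  obtain a j B0 where B: "B = insert {a, j} B0" "{a, j} \<notin> B0" "j \<notin> \<Union>B0" "a \<noteq> j"
    using tree_subforest_leaf[OF Suc.prems] by blast
  have B0: "B0 \<subseteq> tree_edges D h" "{a, j} \<in> tree_edges D h" using Suc.prems(1) B(1) by auto
  have m: "card B0 = m" "card B = Suc m"
    using Suc.hyps(2) B(1,2) finite_subset[OF B0(1) finite_tree_edges] by simp_all
  show ?case
  proof (cases "B0 = {}")
    case True
    then have "embedding_weight D h n x B \<le> ?\<alpha> * ?\<beta>"
      using embedding_weight_insert_detached[OF B0(1,2) B(2) _ B(3,4)] B(1)
      by (simp add: embedding_weight_empty)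
    then show ?thesis using True B(1) by (simp add: mult.commute)
  next
    case False
    then have IH: "embedding_weight D h n x B0 \<le> ?\<beta> * ?\<alpha> ^ m"
      using Suc.hyps(1) m(1) B0(1) by blast
    have "embedding_weight D h n x B \<le> embedding_weight D h n x B0 * ?\<alpha>"
      using embedding_weight_insert_leaf[OF B0(1,2) B(2-4)] B(1) by simp
    also have "\<dots> \<le> ?\<beta> * ?\<alpha> ^ m * ?\<alpha>"
      using IH x_nonneg by (intro mult_right_mono) simp_all
    also have "\<dots> = ?\<beta> * ?\<alpha> ^ card B" unfolding m(2) by (simp only: power_Suc2 mult.assoc)
    finally show ?thesis .
  qed
qed

lemma sum_embedding_weight_le:
  "(\<Sum>B\<in>Pow (tree_edges D h). embedding_weight D h n x B)
     \<le> 1 + 2 * real (treesize D h) / n * (1 + 2 * x * (real D + 1) / n) ^ card (tree_edges D h)"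
proof -
  let ?\<alpha> = "2 * x * (real D + 1) / n" and ?\<beta> = "2 * real (treesize D h) / n"
  have "(\<Sum>B\<in>Pow (tree_edges D h). embedding_weight D h n x B)
      \<le> (\<Sum>B\<in>Pow (tree_edges D h). (if B = {} then 1 else 0) + ?\<beta> * ?\<alpha> ^ card B)"
  proof (rule sum_mono)
    fix B assume "B \<in> Pow (tree_edges D h)"
    moreover have "0 \<le> ?\<beta> * ?\<alpha> ^ card B" using x_nonneg by simp
    ultimately show "embedding_weight D h n x B \<le> (if B = {} then 1 else 0) + ?\<beta> * ?\<alpha> ^ card B"
      using embedding_weight_le[of B] by (auto simp: embedding_weight_empty)
  qed
  also have "\<dots> = (\<Sum>B\<in>Pow (tree_edges D h). if B = {} then 1 else 0)
                    + ?\<beta> * (\<Sum>B\<in>Pow (tree_edges D h). ?\<alpha> ^ card B)"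
    by (simp only: sum.distrib sum_distrib_left)
  also have "(\<Sum>B\<in>Pow (tree_edges D h). if B = {} then 1 else 0) = (1::real)"
    by (simp add: sum.delta finite_tree_edges)
  also have "(\<Sum>B\<in>Pow (tree_edges D h). ?\<alpha> ^ card B) = (1 + ?\<alpha>) ^ card (tree_edges D h)"
    by (rule sum_Pow_power_card[OF finite_tree_edges])
  finally show ?thesis .
qed

end

lemma power_card_edge_image_Int:
  fixes x :: "'c :: comm_semiring_1"
  assumes T: "finite T" and inj: "inj_on (image \<sigma>) T"
  shows "(1 + x) ^ card (edge_image \<sigma> T \<inter> M)
       = (\<Sum>B\<in>Pow T. if edge_image \<sigma> B \<subseteq> M then x ^ card B else 0)"
proof -
  let ?T' = "{e \<in> T. \<sigma> ` e \<in> M}"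
  have "edge_image \<sigma> T \<inter> M = image \<sigma> ` ?T'" unfolding edge_image_def by auto
  moreover have "inj_on (image \<sigma>) ?T'" using inj by (rule inj_on_subset) auto
  ultimately have "card (edge_image \<sigma> T \<inter> M) = card ?T'" by (simp add: card_image)
  then have "(1 + x) ^ card (edge_image \<sigma> T \<inter> M) = (\<Sum>B\<in>Pow ?T'. x ^ card B)"
    using sum_Pow_power_card[of ?T' x] T by simp
  also have "Pow ?T' = {B \<in> Pow T. edge_image \<sigma> B \<subseteq> M}" unfolding edge_image_def by auto
  also have "(\<Sum>B\<in>{B \<in> Pow T. edge_image \<sigma> B \<subseteq> M}. x ^ card B)
           = (\<Sum>B\<in>Pow T. if edge_image \<sigma> B \<subseteq> M then x ^ card B else 0)"
    by (rule sum.inter_filter) (simp add: T)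
  finally show ?thesis .
qed

lemma sum_injections_agreeing:
  assumes \<tau>: "\<tau> \<in> injections (treesize D h) n" and \<phi>: "\<phi> \<in> tree_embeddings D h B"
    and B: "B \<subseteq> tree_edges D h"
  shows "(\<Sum>\<sigma>\<in>injections (treesize D h) n. if \<forall>u\<in>\<Union>B. \<sigma> u = \<tau> (\<phi> u) then 1 else 0)
       = real (falling_fact (n - card (\<Union>B)) (treesize D h - card (\<Union>B)))"
proof -
  let ?I = "injections (treesize D h) n"
  have "card {\<sigma> \<in> ?I. \<forall>u\<in>\<Union>B. \<sigma> u = \<tau> (\<phi> u)}
      = falling_fact (n - card (\<Union>B)) (treesize D h - card (\<Union>B))"
  proof (rule card_injections_extending)
    have \<phi>': "\<phi> \<in> \<Union>B \<rightarrow> {0..<treesize D h}" "inj_on \<phi> (\<Union>B)"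
      using \<phi> unfolding tree_embeddings_def by auto
    have \<tau>': "\<tau> \<in> {0..<treesize D h} \<rightarrow> {0..<n}" "inj_on \<tau> {0..<treesize D h}"
      using \<tau> unfolding injections_def by auto
    show "inj_on (\<lambda>u. \<tau> (\<phi> u)) (\<Union>B)"
      using comp_inj_on[OF \<phi>'(2) inj_on_subset[OF \<tau>'(2)]] \<phi>'(1) by (auto simp: comp_def)
    show "(\<lambda>u. \<tau> (\<phi> u)) ` \<Union>B \<subseteq> {0..<n}" using \<phi>'(1) \<tau>'(1) by auto
    show "\<Union>B \<subseteq> {0..<treesize D h}" using B by (rule Union_tree_edges_subset)
  qed
  moreover have "(\<Sum>\<sigma>\<in>?I. if \<forall>u\<in>\<Union>B. \<sigma> u = \<tau> (\<phi> u) then 1 else 0)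
      = real (card {\<sigma> \<in> ?I. \<forall>u\<in>\<Union>B. \<sigma> u = \<tau> (\<phi> u)})"
    by (rule card_filter_eq_sum[symmetric, OF finite_injections])
  ultimately show ?thesis by (simp only:)
qed

lemma indicator_le_sum_agreeing_embeddings:
  fixes x :: real
  assumes \<sigma>: "\<sigma> \<in> injections (treesize D h) n" and \<tau>: "\<tau> \<in> injections (treesize D h) n"
    and B: "B \<subseteq> tree_edges D h" and x: "0 \<le> x"
  shows "(if edge_image \<sigma> B \<subseteq> edge_image \<tau> (tree_edges D h) then x ^ card B else 0)
       \<le> x ^ card B * (\<Sum>\<phi>\<in>tree_embeddings D h B. if \<forall>u\<in>\<Union>B. \<sigma> u = \<tau> (\<phi> u) then 1 else 0)"
proof (cases "edge_image \<sigma> B \<subseteq> edge_image \<tau> (tree_edges D h)")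
  case True
  let ?a = "\<lambda>\<phi>. if \<forall>u\<in>\<Union>B. \<sigma> u = \<tau> (\<phi> u) then 1 else (0::real)"
  obtain \<phi> where \<phi>: "\<phi> \<in> tree_embeddings D h B" "\<forall>u\<in>\<Union>B. \<sigma> u = \<tau> (\<phi> u)"
    using exists_tree_embedding[OF \<sigma> \<tau> B True] by blast
  have "?a \<phi> \<le> (\<Sum>\<phi>\<in>tree_embeddings D h B. ?a \<phi>)"
    using \<phi>(1) finite_tree_embeddings[OF B] by (intro member_le_sum) auto
  then have "x ^ card B * 1 \<le> x ^ card B * (\<Sum>\<phi>\<in>tree_embeddings D h B. ?a \<phi>)"
    using \<phi>(2) x by (intro mult_left_mono) auto
  then show ?thesis using True by simp
qed (use x in \<open>simp add: sum_nonneg\<close>)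

lemma sum_injections_power_card_Int_le:
  fixes x :: real
  assumes \<tau>: "\<tau> \<in> injections (treesize D h) n" and x: "0 \<le> x"
  shows "(\<Sum>\<sigma>\<in>injections (treesize D h) n.
            (1 + x) ^ card (edge_image \<sigma> (tree_edges D h) \<inter> edge_image \<tau> (tree_edges D h)))
       \<le> (\<Sum>B\<in>Pow (tree_edges D h). x ^ card B * card (tree_embeddings D h B)
             * falling_fact (n - card (\<Union>B)) (treesize D h - card (\<Union>B)))"
proof -
  let ?I = "injections (treesize D h) n" and ?T = "tree_edges D h"
  let ?a = "\<lambda>\<sigma> B \<phi>. if \<forall>u\<in>\<Union>B. \<sigma> u = \<tau> (\<phi> u) then 1 else (0::real)"
  have "(\<Sum>\<sigma>\<in>?I. (1 + x) ^ card (edge_image \<sigma> ?T \<inter> edge_image \<tau> ?T))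
      = (\<Sum>\<sigma>\<in>?I. \<Sum>B\<in>Pow ?T. if edge_image \<sigma> B \<subseteq> edge_image \<tau> ?T then x ^ card B else 0)"
    by (intro sum.cong refl power_card_edge_image_Int finite_tree_edges inj_on_image_tree_edges)
       (auto simp: injections_def)
  also have "\<dots> \<le> (\<Sum>\<sigma>\<in>?I. \<Sum>B\<in>Pow ?T. x ^ card B * (\<Sum>\<phi>\<in>tree_embeddings D h B. ?a \<sigma> B \<phi>))"
    using indicator_le_sum_agreeing_embeddings[OF _ \<tau> _ x] by (intro sum_mono) auto
  also have "\<dots> = (\<Sum>B\<in>Pow ?T. \<Sum>\<sigma>\<in>?I. x ^ card B * (\<Sum>\<phi>\<in>tree_embeddings D h B. ?a \<sigma> B \<phi>))"
    by (rule sum.swap)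
  also have "\<dots> = (\<Sum>B\<in>Pow ?T. x ^ card B * (\<Sum>\<phi>\<in>tree_embeddings D h B. \<Sum>\<sigma>\<in>?I. ?a \<sigma> B \<phi>))"
    by (simp only: sum_distrib_left[symmetric] sum.swap[of _ ?I])
  also have "\<dots> = (\<Sum>B\<in>Pow ?T. x ^ card B * card (tree_embeddings D h B)
                     * falling_fact (n - card (\<Union>B)) (treesize D h - card (\<Union>B)))"
  proof (rule sum.cong[OF refl])
    fix B assume "B \<in> Pow ?T"
    then have "(\<Sum>\<phi>\<in>tree_embeddings D h B. \<Sum>\<sigma>\<in>?I. ?a \<sigma> B \<phi>)
        = (\<Sum>\<phi>\<in>tree_embeddings D h B. real (falling_fact (n - card (\<Union>B)) (treesize D h - card (\<Union>B))))"
      by (intro sum.cong refl sum_injections_agreeing[OF \<tau>]) auto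
    then show "x ^ card B * (\<Sum>\<phi>\<in>tree_embeddings D h B. \<Sum>\<sigma>\<in>?I. ?a \<sigma> B \<phi>)
        = x ^ card B * card (tree_embeddings D h B)
          * falling_fact (n - card (\<Union>B)) (treesize D h - card (\<Union>B))"
      by simp
  qed
  finally show ?thesis .
qed

lemma second_moment_le_sum_embedding_weight:
  assumes lam: "0 < lam" "lam < real n" and K: "treesize D h \<le> n"
  shows "second_moment D h lam n
           \<le> (\<Sum>B\<in>Pow (tree_edges D h). embedding_weight D h n (n / lam - 1) B)"
proof -
  let ?I = "injections (treesize D h) n" and ?T = "tree_edges D h" and ?K = "treesize D h"
  define x where "x = n / lam - 1"
  let ?S = "\<Sum>B\<in>Pow ?T. x ^ card B * card (tree_embeddings D h B)
              * falling_fact (n - card (\<Union>B)) (?K - card (\<Union>B))"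
  have x: "0 \<le> x" "n / lam = 1 + x" using lam by (simp_all add: x_def field_simps)
  have I: "0 < card ?I" using card_injections falling_fact_pos[OF K] by simp
  have "second_moment D h lam n
      = (\<Sum>\<sigma>\<in>?I. \<Sum>\<tau>\<in>?I. (1 + x) ^ card (edge_image \<sigma> ?T \<inter> edge_image \<tau> ?T)) / (card ?I)\<^sup>2"
    using second_moment_eq[OF lam K] x(2) by simp
  also have "\<dots> = (\<Sum>\<tau>\<in>?I. \<Sum>\<sigma>\<in>?I. (1 + x) ^ card (edge_image \<sigma> ?T \<inter> edge_image \<tau> ?T)) / (card ?I)\<^sup>2"
    by (subst sum.swap) (rule refl)
  also have "\<dots> \<le> (\<Sum>\<tau>\<in>?I. ?S) / (card ?I)\<^sup>2"
    using sum_injections_power_card_Int_le x(1) by (intro divide_right_mono sum_mono) auto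
  also have "\<dots> = ?S / card ?I" using I by (simp add: power2_eq_square)
  also have "\<dots> = (\<Sum>B\<in>Pow ?T. embedding_weight D h n x B)"
    unfolding sum_divide_distrib
  proof (rule sum.cong[OF refl])
    fix B assume "B \<in> Pow ?T"
    then have "card (\<Union>B) \<le> ?K"
      using Union_tree_edges_subset[of B] card_mono[of "{0..<?K}"] by fastforce
    then have "card ?I = falling_fact n (card (\<Union>B)) * falling_fact (n - card (\<Union>B)) (?K - card (\<Union>B))"
      using falling_fact_add[of n "card (\<Union>B)" "?K - card (\<Union>B)"] card_injections by simp
    with I have "real (falling_fact n (card (\<Union>B))) \<noteq> 0"
      "real (falling_fact (n - card (\<Union>B)) (?K - card (\<Union>B))) \<noteq> 0" by simp_all
    with \<open>card ?I = _\<close> show "x ^ card B * card (tree_embeddings D h B)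
                 * falling_fact (n - card (\<Union>B)) (?K - card (\<Union>B)) / card ?I
             = embedding_weight D h n x B"
      unfolding embedding_weight_def by simp
  qed
  finally show ?thesis unfolding x_def .
qed

lemma one_le_second_moment:
  assumes lam: "0 < lam" "lam < real n" and K: "treesize D h \<le> n"
  shows "1 \<le> second_moment D h lam n"
proof -
  let ?I = "injections (treesize D h) n"
  have I: "0 < real (card ?I)" using card_injections falling_fact_pos[OF K] by simp
  have "(card ?I)\<^sup>2 = (\<Sum>\<sigma>\<in>?I. \<Sum>\<tau>\<in>?I. 1 :: real)" by (simp add: power2_eq_square)
  also have "\<dots> \<le> (\<Sum>\<sigma>\<in>?I. \<Sum>\<tau>\<in>?I.
      (n / lam) ^ card (edge_image \<sigma> (tree_edges D h) \<inter> edge_image \<tau> (tree_edges D h)))"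
    using lam by (intro sum_mono one_le_power) simp
  finally show ?thesis using I unfolding second_moment_eq[OF lam K] by simp
qed

lemma second_moment_le:
  assumes D: "D > 0" and lam: "0 < lam" "lam < real n" and K: "2 * treesize D h \<le> n"
  shows "second_moment D h lam n
           \<le> 1 + 2 * real (treesize D h) / n * (1 + 2 * (real D + 1) / lam) ^ treesize D h"
proof -
  let ?x = "real n / lam - 1" and ?T = "tree_edges D h" and ?c = "1 + 2 * (real D + 1) / lam"
  have x: "0 \<le> ?x" "?x \<le> n / lam" using lam by (simp_all add: field_simps)
  have "2 * ?x * (real D + 1) / n \<le> 2 * (n / lam) * (real D + 1) / n"
    using x lam by (intro divide_right_mono mult_right_mono) auto
  also have "\<dots> = 2 * (real D + 1) / lam" using lam by simp
  finally have "2 * ?x * (real D + 1) / n \<le> 2 * (real D + 1) / lam" .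
  moreover have "0 \<le> 2 * ?x * (real D + 1) / n" using x(1) by simp
  ultimately have "(1 + 2 * ?x * (real D + 1) / n) ^ card ?T \<le> ?c ^ card ?T"
    by (intro power_mono) linarith+
  also have "\<dots> \<le> ?c ^ treesize D h"
    using lam card_tree_edges_le by (intro power_increasing) auto
  finally have power_le: "(1 + 2 * ?x * (real D + 1) / n) ^ card ?T \<le> ?c ^ treesize D h" .
  have "second_moment D h lam n \<le> (\<Sum>B\<in>Pow ?T. embedding_weight D h n ?x B)"
    using K by (intro second_moment_le_sum_embedding_weight[OF lam]) simp
  also have "\<dots> \<le> 1 + 2 * real (treesize D h) / n * (1 + 2 * ?x * (real D + 1) / n) ^ card ?T"
    by (rule sum_embedding_weight_le[OF D K x(1)])
  also have "\<dots> \<le> 1 + 2 * real (treesize D h) / n * ?c ^ treesize D h"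
    using power_le by (intro add_left_mono mult_left_mono) simp_all
  finally show ?thesis .
qed

lemma tendsto_zero_if_le_eps_ln:
  fixes K :: "nat \<Rightarrow> nat" and c :: real
  assumes c: "1 \<le> c"
    and small: "\<And>\<epsilon>. 0 < \<epsilon> \<Longrightarrow> \<forall>\<^sub>F n in sequentially. real (K n) \<le> \<epsilon> * ln (real n)"
  shows "(\<lambda>n. 2 * real (K n) / real n * c ^ K n) \<longlonglongrightarrow> 0"
proof (rule tendsto_sandwich[of "\<lambda>_. 0" _ _ "\<lambda>n. 2 * ln (real n) / real n * sqrt (real n)"])
  \<comment> \<open>\<open>\<epsilon>\<close> makes \<open>c\<^sup>K \<le> n\<^sup>\<epsilon>\<^sup>l\<^sup>n\<^sup>c \<le> \<surd>n\<close>; naming \<open>ln c\<close> keeps the simplifier from turning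
    \<open>0 \<le> ln c\<close> back into \<open>1 \<le> c\<close>\<close>
  define L where "L = ln c"
  define \<epsilon> where "\<epsilon> = 1 / (2 * (1 + L))"
  have "0 \<le> L" using c by (simp add: L_def)
  then have \<epsilon>: "0 < \<epsilon>" "\<epsilon> \<le> 1" "\<epsilon> * ln c \<le> 1 / 2"
    by (auto simp: \<epsilon>_def L_def[symmetric] field_simps)
  have "\<forall>\<^sub>F n in sequentially. 1 \<le> real n" by real_asymp
  with small[OF \<epsilon>(1)] show "\<forall>\<^sub>F n in sequentially.
      2 * real (K n) / real n * c ^ K n \<le> 2 * ln (real n) / real n * sqrt (real n)"
  proof eventually_elim
    case (elim n)
    have ln: "0 \<le> ln (real n)" using elim(2) by simp
    have "c ^ K n = exp (real (K n) * ln c)" using c by (simp add: exp_of_nat_mult)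
    also have "\<dots> \<le> exp (\<epsilon> * ln (real n) * ln c)"
      using elim(1) c by (intro exp_mono mult_right_mono) auto
    also have "\<epsilon> * ln (real n) * ln c \<le> ln (real n) / 2"
      using mult_left_mono[OF \<epsilon>(3) ln] by (simp add: mult_ac)
    also have "exp (ln (real n) / 2) = sqrt (real n)"
      using elim(2) by (simp add: powr_half_sqrt[symmetric] powr_def)
    finally have "c ^ K n \<le> sqrt (real n)" by simp
    moreover have "real (K n) \<le> ln (real n)"
      using elim(1) mult_right_mono[OF \<epsilon>(2) ln] by simp
    ultimately show ?case
      using elim(2) c by (intro mult_mono divide_right_mono) auto
  qed
  have "0 \<le> 2 * real (K n) / real n * c ^ K n" for n using c by simp
  then show "\<forall>\<^sub>F n in sequentially. 0 \<le> 2 * real (K n) / real n * c ^ K n" by simp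
  show "(\<lambda>n. 2 * ln (real n) / real n * sqrt (real n)) \<longlonglongrightarrow> 0" by real_asymp
qed simp

lemma second_moment_tendsto_1:
  fixes hs :: "nat \<Rightarrow> nat"
  assumes D: "D > 0" and lam: "0 < lam"
    and small: "\<And>\<epsilon>. 0 < \<epsilon> \<Longrightarrow> \<forall>\<^sub>F n in sequentially. real (treesize D (hs n)) \<le> \<epsilon> * ln (real n)"
  shows "(\<lambda>n. second_moment D (hs n) lam n) \<longlonglongrightarrow> 1"
proof -
  let ?K = "\<lambda>n. treesize D (hs n)" and ?c = "1 + 2 * (real D + 1) / lam"
  let ?bound = "\<lambda>n. 1 + 2 * real (?K n) / n * ?c ^ ?K n"
  have "(\<lambda>n. 2 * real (?K n) / n * ?c ^ ?K n) \<longlonglongrightarrow> 0"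
  proof (rule tendsto_zero_if_le_eps_ln)
    show "1 \<le> ?c" using lam by simp
  qed (fact small)
  from tendsto_add[OF tendsto_const[of "1 :: real"] this] have lim: "?bound \<longlonglongrightarrow> 1" by simp
  have "\<forall>\<^sub>F n in sequentially. 2 * ln (real n) \<le> real n" "\<forall>\<^sub>F n in sequentially. lam < real n"
    by real_asymp+
  with small[OF zero_less_one] have bounds: "\<forall>\<^sub>F n in sequentially.
      1 \<le> second_moment D (hs n) lam n \<and> second_moment D (hs n) lam n \<le> ?bound n"
  proof eventually_elim
    case (elim n)
    then have "real (2 * ?K n) \<le> real n" by simp
    then have K: "2 * ?K n \<le> n" by (simp only: of_nat_le_iff)
    show ?case
    proof
      show "1 \<le> second_moment D (hs n) lam n"
        using K by (intro one_le_second_moment[OF lam elim(3)]) simp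
      show "second_moment D (hs n) lam n \<le> ?bound n"
        by (rule second_moment_le[OF D lam elim(3) K])
    qed
  qed
  show ?thesis
  proof (rule tendsto_sandwich[of "\<lambda>_. 1" _ _ ?bound])
    show "\<forall>\<^sub>F n in sequentially. 1 \<le> second_moment D (hs n) lam n"
      using bounds by (rule eventually_mono) (rule conjunct1)
    show "\<forall>\<^sub>F n in sequentially. second_moment D (hs n) lam n \<le> ?bound n"
      using bounds by (rule eventually_mono) (rule conjunct2)
  qed (rule tendsto_const, fact lim)
qed

theorem lemma9:
  fixes D :: nat and lam :: real and hs :: "nat \<Rightarrow> nat"
  assumes "D > 1"
    and "0 < lam" and "lam < lambdaD D"
    and "\<forall>\<^sub>F n in sequentially.
           real (hs n) \<le> real (hbar D lam n) - ln (real (hbar D lam n)) / ln (real D)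
                          + ln (1 - 1 / real D) / ln (real D)"
  shows "(\<lambda>n. second_moment D (hs n) lam n) \<longlonglongrightarrow> 1"
proof (rule second_moment_tendsto_1)
  show "D > 0" using assms(1) by simp
  show "0 < lam" by (fact assms(2))
qed (fact treesize_le_eps_ln[OF assms])

end
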